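(* Assume Assumption R and Assumption H with H5 holding for $l=0$. Let $\beta_n:=\beta_0+n^{-1/2}\delta_n$ for a (possibly random) $\delta_n=o_p(n^{1/2})$, and $\Delta^k_n(\beta):=n^{1/2}[\bar\theta^k_n(\beta,\lambda_n)-\bar\theta^k_n(\beta_0,\lambda_n)]$. Then (i) $\sup_{\beta\in B}\|\bar\theta^k_n(\beta,\lambda_n)-\theta^k(\beta,\lambda_n)\|\to_p0$; (ii) $\theta^k(\beta_0,\lambda_n)-\theta(\beta_0,0)=O_p(\lambda_n^{k+1})$; (iii) $\Delta^k_n(\beta_n)=G\delta_n+o_p(1+\|\delta_n\|)$.
   Context: Setting. Observed data $(y_i,x_i)$, $i=1,\dots,n$, are i.i.d. Fix an integer $M\ge1$. For $m\in\{1,\dots,M\}$ simulated unobservables $\eta_i^m$ are drawn (i.i.d. over $i,m$, independent of the $x_i$); write $z_i^m=(x_i,\eta_i^m)$, and $z_i^0=(x_i,\eta_i^0)$ where $\eta_i^0$ are the true (unobserved) unobservables. $B\subset\mathbb R^{d_\beta}$ is compact and $\Lambda=[0,1]$. For $(\beta,\lambda)\in B\times\Lambda$ the structural model delivers smoothed outcomes $y(z;\beta,\lambda)$ ($\lambda=0$ = unsmoothed outcomes); write $y_i^m(\beta,\lambda)=y(z_i^m;\beta,\lambda)$. Auxiliary model: a function $\ell(y,x;\theta)$, $\theta\in\Theta\subset\mathbb R^{d_\theta}$; $\mathcal L_n(\tilde y,x;\theta)=n^{-1}\sum_{i=1}^n\ell(\tilde y_i,x_i;\theta)$; $\mathcal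 L_n(\theta):=\mathcal L_n(y,x;\theta)$ (observed data), $\mathcal L(\theta):=\mathbb E\mathcal L_n(\theta)$; dots denote gradient/Hessian in $\theta$. $\hat\theta_n:=\arg\max_\theta\mathcal L_n(\theta)$; $\hat\theta^m_n(\beta,\lambda):=\arg\max_\theta\mathcal L_n(y^m(\beta,\lambda),x;\theta)$ for $m\ge1$, and by convention $\hat\theta^0_n(\beta,\lambda):=\hat\theta_n$. $\bar\theta_n(\beta,\lambda):=M^{-1}\sum_{m=1}^M\hat\theta^m_n(\beta,\lambda)$. $\theta(\beta,\lambda)$ is a deterministic function on $B\times\Lambda$ (the binding function). $\ell^m_i(\beta,\lambda;\theta):=\ell(y_i^m(\beta,\lambda),x_i;\theta)$ for $m\ge1$ and $\ell^0_i(\beta,\lambda;\theta):=\ell(y_i,x_i;\theta)$. Jackknifing: fix $\delta\in(0,1)$ and an order $k\ge0$, with weights $\gamma_{0k},\dots,\gamma_{kk}$ summing to $1$ such that $\theta^k(\beta,\lambda):=\sum_{r=0}^k\gamma_{rk}\theta(\beta,\delta^r\lambda)=\theta(\beta,0)+O(\lambda^{k+1})$ as $\lambda\to0$; $\bar\theta^k_n(\beta,\lambda):=\sum_{r=0}^k\gamma_{rk}\bar\theta_n(\beta,\delta^r\lambda)$. Assumption R: (R1) $y_i=y(z_i^0;\beta_0,0)$ for some $\beta_0\in\operatorname{int}B$; (R2) $\theta_0:=\theta(\beta_0,0)\in\operatorname{int}\Theta$; (R3) $\theta(\beta,\lambda)$ is single-valued and $(k_0+1)$-times differentiable in $\beta$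 on $(\operatorname{int}B)\times\Lambda$; (R4) $\beta\mapsto\theta(\beta,0)$ is injective; (R5) $\lambda_n\in\Lambda$ is measurable w.r.t. a $\sigma$-field $\mathcal F$ supporting all observed and simulated variables, and $\lambda_n\to_p0$; (R6) $k\in\{0,\dots,k_0\}$ and $n^{1/2}\lambda_n^{k+1}=o_p(1)$; (R8) $W_n\to_pW$, $W$ positive definite. Assumption H: (H1) $\mathcal L_n$ is twice continuously differentiable on $\operatorname{int}\Theta$; (H2) for $l\in\{0,1,2\}$, $\partial^l_\theta\mathcal L_n(\theta)\to_p\partial^l_\theta\mathcal L(\theta)$, and $n^{-1}\sum_i\dot\ell^{m_1}_i(\beta_1,\lambda_1;\theta_1)\dot\ell^{m_2}_i(\beta_2,\lambda_2;\theta_2)^\top\to_p\mathbb E[\dot\ell^{m_1}_i(\beta_1,\lambda_1;\theta_1)\dot\ell^{m_2}_i(\beta_2,\lambda_2;\theta_2)^\top]$, uniformly over $(\beta_j,\lambda_j)\in B\times\Lambda$ and $\theta_j$ in compact subsets of $\operatorname{int}\Theta$, for all $m_1,m_2\in\{0,\dots,M\}$; (H3) $\psi^m_n(\beta,\lambda):=n^{1/2}[\hat\theta^m_n(\beta,\lambda)-\theta(\beta,\lambda)]\rightsquigarrow\psi^m(\beta,\lambda)$ in $\ell^\infty(B\times\Lambda)$ jointly in $m\in\{0,\dots,M\}$, each $\psi^m$ a mean-zero continuous Gaussian process (for $m=0$, $\psi^0_n=n^{1/2}(\hat\theta_n-\theta_0)$); (H4) for any random $\beta_n=\beta_0+o_p(1)$,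 $\psi^m_n(\beta_n,\lambda_n)=-H^{-1}\phi^m_n+o_p(1)$ where $\phi^m_n:=n^{-1/2}\sum_{i=1}^n\dot\ell^m_i(\beta_0,0;\theta_0)$, $H:=\mathbb E\ddot{\mathcal L}_n(\theta_0)=\ddot{\mathcal L}(\theta_0)$ is nonsingular, and $(\phi^m_n)_{m=0}^M\rightsquigarrow(\phi^m)_{m=0}^M$ jointly Gaussian with $\Sigma:=\mathbb E\phi^m\phi^{m\top}=\mathbb E\phi^m_n\phi^{m\top}_n$ and $R:=\mathbb E\phi^{m_1}\phi^{m_2\top}=\mathbb E\phi^{m_1}_n\phi^{m_2\top}_n$ for $m_1\ne m_2$; (H5, with index $l$) $\sup_{\beta\in B}\|\partial^l_\beta\hat\theta^m_n(\beta,\lambda_n)-\partial^l_\beta\theta(\beta,0)\|=o_p(1)$ for each $m\in\{1,\dots,M\}$. Notation: $G$ is the $d_\theta\times d_\beta$ Jacobian of $\beta\mapsto\theta(\beta,0)$ at $\beta_0$. *)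

theory Defs
  imports "HOL-Probability.Probability"
begin

section \<open>Stochastic order notation (via outer probability, to cover non-measurable sups)\<close>

definition outer_prob :: "'w measure \<Rightarrow> 'w set \<Rightarrow> real" where
  "outer_prob P A = (INF S \<in> {S \<in> sets P. A \<inter> space P \<subseteq> S}. measure P S)"

definition outer_exp :: "'w measure \<Rightarrow> ('w \<Rightarrow> real) \<Rightarrow> real" where
  "outer_exp P f = (INF g \<in> {g \<in> borel_measurable P. integrable P g \<and> (\<forall>\<omega>\<in>space P. f \<omega> \<le> g \<omega>)}.
                       integral\<^sup>L P g)"

definition small_op :: "'w measure \<Rightarrow> (nat \<Rightarrow> 'w \<Rightarrow> 'a::real_normed_vector) \<Rightarrow> (nat \<Rightarrow> 'w \<Rightarrow> real) \<Rightarrow> bool" where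
  "small_op P X r \<longleftrightarrow>
     (\<forall>\<epsilon>>0. (\<lambda>n. outer_prob P {\<omega> \<in> space P. norm (X n \<omega>) > \<epsilon> * r n \<omega>}) \<longlonglongrightarrow> 0)"

definition big_Op :: "'w measure \<Rightarrow> (nat \<Rightarrow> 'w \<Rightarrow> 'a::real_normed_vector) \<Rightarrow> (nat \<Rightarrow> 'w \<Rightarrow> real) \<Rightarrow> bool" where
  "big_Op P X r \<longleftrightarrow>
     (\<forall>\<epsilon>>0. \<exists>K N. \<forall>n\<ge>N. outer_prob P {\<omega> \<in> space P. norm (X n \<omega>) > K * r n \<omega>} < \<epsilon>)"

definition op_unif :: "'w measure \<Rightarrow> 'i set \<Rightarrow> (nat \<Rightarrow> 'i \<Rightarrow> 'w \<Rightarrow> 'a::real_normed_vector) \<Rightarrow> bool" where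
  "op_unif P S X \<longleftrightarrow>
     (\<forall>\<epsilon>>0. (\<lambda>n. outer_prob P {\<omega> \<in> space P. \<exists>s\<in>S. norm (X n s \<omega>) > \<epsilon>}) \<longlonglongrightarrow> 0)"

text \<open>independence of two random elements with possibly different value types
  (the library's indep_var, as characterised by lemma indep_var_eq, without the same-type restriction)\<close>
definition indep_rv :: "'w measure \<Rightarrow> 'a measure \<Rightarrow> ('w \<Rightarrow> 'a) \<Rightarrow> 'b measure \<Rightarrow> ('w \<Rightarrow> 'b) \<Rightarrow> bool" where
  "indep_rv P S X T Y \<longleftrightarrow> X \<in> measurable P S \<and> Y \<in> measurable P T \<and>
     prob_space.indep_set P
       (sigma_sets (space P) {X -` A \<inter> space P | A. A \<in> sets S})
       (sigma_sets (space P) {Y -` A \<inter> space P | A. A \<in> sets T})"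

definition bdd_cont_on :: "'f set \<Rightarrow> ('f \<Rightarrow> 'f \<Rightarrow> real) \<Rightarrow> ('f \<Rightarrow> real) \<Rightarrow> bool" where
  "bdd_cont_on D d h \<longleftrightarrow> (\<exists>C. \<forall>F\<in>D. \<bar>h F\<bar> \<le> C) \<and>
     (\<forall>F\<in>D. \<forall>\<epsilon>>0. \<exists>\<delta>>0. \<forall>G\<in>D. d F G < \<delta> \<longrightarrow> \<bar>h F - h G\<bar> < \<epsilon>)"

definition weak_conv :: "'w measure \<Rightarrow> (nat \<Rightarrow> 'w \<Rightarrow> 'f) \<Rightarrow> 'v measure \<Rightarrow> ('v \<Rightarrow> 'f)
    \<Rightarrow> 'f set \<Rightarrow> ('f \<Rightarrow> 'f \<Rightarrow> real) \<Rightarrow> bool" where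
  "weak_conv P Xn Q X D d \<longleftrightarrow> (\<forall>n. \<forall>\<omega>\<in>space P. Xn n \<omega> \<in> D) \<and> (\<forall>v\<in>space Q. X v \<in> D) \<and>
     (\<forall>h. bdd_cont_on D d h \<longrightarrow>
        (\<lambda>n. outer_exp P (\<lambda>\<omega>. h (Xn n \<omega>))) \<longlonglongrightarrow> outer_exp Q (\<lambda>v. h (X v)))"

text \<open>Space (ell^infty(S))^(M+1) of (M+1)-tuples of bounded paths, with the sup distance\<close>
definition bdd_paths :: "nat \<Rightarrow> 'i set \<Rightarrow> (nat \<Rightarrow> 'i \<Rightarrow> 'a::real_normed_vector) set" where
  "bdd_paths M S = {F. \<forall>m\<le>M. bounded (F m ` S)}"

definition sup_dist :: "nat \<Rightarrow> 'i set \<Rightarrow> (nat \<Rightarrow> 'i \<Rightarrow> 'a::real_normed_vector) \<Rightarrow> (nat \<Rightarrow> 'i \<Rightarrow> 'a) \<Rightarrow> real" where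
  "sup_dist M S F G = (SUP ms \<in> {..M} \<times> S. norm (F (fst ms) (snd ms) - G (fst ms) (snd ms)))"

definition max_dist :: "nat \<Rightarrow> (nat \<Rightarrow> 'a::real_normed_vector) \<Rightarrow> (nat \<Rightarrow> 'a) \<Rightarrow> real" where
  "max_dist M F G = Max ((\<lambda>m. norm (F m - G m)) ` {..M})"

definition gaussian_rv :: "'v measure \<Rightarrow> ('v \<Rightarrow> real) \<Rightarrow> bool" where
  "gaussian_rv Q X \<longleftrightarrow> X \<in> borel_measurable Q \<and>
     ((\<exists>\<mu> \<sigma>. \<sigma> > 0 \<and> distributed Q lborel X (normal_density \<mu> \<sigma>)) \<or> (\<exists>c. AE v in Q. X v = c))"

definition mean0_cont_gaussian_process ::
    "'v measure \<Rightarrow> 'i::topological_space set \<Rightarrow> ('i \<Rightarrow> 'v \<Rightarrow> real^'p) \<Rightarrow> bool" where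
  "mean0_cont_gaussian_process Q S Z \<longleftrightarrow>
     (\<forall>S' c. finite S' \<and> S' \<subseteq> S \<longrightarrow> gaussian_rv Q (\<lambda>v. \<Sum>s\<in>S'. c s \<bullet> Z s v)) \<and>
     (\<forall>s\<in>S. \<forall>j. integral\<^sup>L Q (\<lambda>v. Z s v $ j) = 0) \<and>
     (\<forall>v\<in>space Q. continuous_on S (\<lambda>s. Z s v))"

definition grad :: "(real^'p \<Rightarrow> real) \<Rightarrow> real^'p \<Rightarrow> real^'p" where
  "grad f t = (\<chi> j. frechet_derivative f (at t) (axis j 1))"

definition hess :: "(real^'p \<Rightarrow> real) \<Rightarrow> real^'p \<Rightarrow> real^'p^'p" where
  "hess f t = (\<chi> j. grad (\<lambda>s. grad f s $ j) t)"

definition C2_on :: "(real^'p) set \<Rightarrow> (real^'p \<Rightarrow> real) \<Rightarrow> bool" where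
  "C2_on U f \<longleftrightarrow> (\<forall>t\<in>U. f differentiable (at t)) \<and>
     (\<forall>j. \<forall>t\<in>U. (\<lambda>s. grad f s $ j) differentiable (at t)) \<and> continuous_on U (hess f)"

fun diff_k :: "nat \<Rightarrow> ('a::real_normed_vector) set \<Rightarrow> ('a \<Rightarrow> 'c::real_normed_vector) \<Rightarrow> bool" where
  "diff_k 0 U f = True"
| "diff_k (Suc k) U f \<longleftrightarrow> (\<forall>b\<in>U. f differentiable (at b)) \<and>
     (\<forall>v. diff_k k U (\<lambda>b. frechet_derivative f (at b) v))"

definition outerp :: "real^'p \<Rightarrow> real^'p \<Rightarrow> real^'p^'p" where
  "outerp u v = (\<chi> a b. u $ a * v $ b)"

definition ell_i :: "('y \<Rightarrow> 'x \<Rightarrow> real^'p \<Rightarrow> real) \<Rightarrow> ('x \<times> 'e \<Rightarrow> real^'b \<Rightarrow> real \<Rightarrow> 'y)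
    \<Rightarrow> (nat \<Rightarrow> 'w \<Rightarrow> 'y) \<Rightarrow> (nat \<Rightarrow> 'w \<Rightarrow> 'x) \<Rightarrow> (nat \<Rightarrow> nat \<Rightarrow> 'w \<Rightarrow> 'e)
    \<Rightarrow> nat \<Rightarrow> nat \<Rightarrow> real^'b \<Rightarrow> real \<Rightarrow> real^'p \<Rightarrow> 'w \<Rightarrow> real" where
  "ell_i ell ystr yobs x eta m i b l t \<omega> =
     (if m = 0 then ell (yobs i \<omega>) (x i \<omega>) t else ell (ystr (x i \<omega>, eta m i \<omega>) b l) (x i \<omega>) t)"

text \<open>L_n(y^m(beta,lambda),x;theta), observations indexed i = 0..n-1\<close>
definition Ln :: "('y \<Rightarrow> 'x \<Rightarrow> real^'p \<Rightarrow> real) \<Rightarrow> ('x \<times> 'e \<Rightarrow> real^'b \<Rightarrow> real \<Rightarrow> 'y)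
    \<Rightarrow> (nat \<Rightarrow> 'w \<Rightarrow> 'y) \<Rightarrow> (nat \<Rightarrow> 'w \<Rightarrow> 'x) \<Rightarrow> (nat \<Rightarrow> nat \<Rightarrow> 'w \<Rightarrow> 'e)
    \<Rightarrow> nat \<Rightarrow> nat \<Rightarrow> real^'b \<Rightarrow> real \<Rightarrow> real^'p \<Rightarrow> 'w \<Rightarrow> real" where
  "Ln ell ystr yobs x eta m n b l t \<omega> = (\<Sum>i<n. ell_i ell ystr yobs x eta m i b l t \<omega>) / real n"

definition thetabar :: "nat \<Rightarrow> (nat \<Rightarrow> nat \<Rightarrow> real^'b \<Rightarrow> real \<Rightarrow> 'w \<Rightarrow> real^'p)
    \<Rightarrow> nat \<Rightarrow> real^'b \<Rightarrow> real \<Rightarrow> 'w \<Rightarrow> real^'p" where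
  "thetabar M thetahat n b l \<omega> = (1 / real M) *\<^sub>R (\<Sum>m\<in>{1..M}. thetahat m n b l \<omega>)"

definition thetabar_k :: "nat \<Rightarrow> (nat \<Rightarrow> nat \<Rightarrow> real^'b \<Rightarrow> real \<Rightarrow> 'w \<Rightarrow> real^'p)
    \<Rightarrow> nat \<Rightarrow> (nat \<Rightarrow> real) \<Rightarrow> real \<Rightarrow> nat \<Rightarrow> real^'b \<Rightarrow> real \<Rightarrow> 'w \<Rightarrow> real^'p" where
  "thetabar_k M thetahat k gam dl n b l \<omega> = (\<Sum>r\<le>k. gam r *\<^sub>R thetabar M thetahat n b (dl ^ r * l) \<omega>)"

definition theta_k :: "(real^'b \<Rightarrow> real \<Rightarrow> real^'p) \<Rightarrow> nat \<Rightarrow> (nat \<Rightarrow> real) \<Rightarrow> real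
    \<Rightarrow> real^'b \<Rightarrow> real \<Rightarrow> real^'p" where
  "theta_k theta k gam dl b l = (\<Sum>r\<le>k. gam r *\<^sub>R theta b (dl ^ r * l))"

end

theory Submission
  imports Defs
begin

text \<open>
  Let \<open>\<psi>\<^sup>m\<^sub>n(b,l) = \<surd>n (thetahat m n b l - theta b l)\<close>. By H3 these processes converge weakly
  to continuous Gaussian paths on \<open>B \<times> [0,1]\<close>, so their suprema are tight and they are
  asymptotically equicontinuous. Part (i) follows because the jackknifed error is a fixed linear
  combination of the \<open>\<psi>\<^sup>m\<^sub>n\<close> divided by \<open>\<surd>n\<close>; part (ii) is the jackknife bias bound evaluated at
  \<open>\<lambda>\<^sub>n \<rightarrow> 0\<close>. For (iii), \<open>\<surd>n (thetabar_k(\<beta>\<^sub>n) - thetabar_k(\<beta>\<^sub>0)) - G \<delta>\<^sub>n\<close> splits into increments of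
  the \<open>\<psi>\<^sup>m\<^sub>n\<close> between points at distance \<open>\<parallel>\<beta>\<^sub>n - \<beta>\<^sub>0\<parallel> \<rightarrow> 0\<close>, which vanish by equicontinuity; two bias
  terms \<open>\<surd>n O(\<lambda>\<^sub>n\<^sup>k\<^sup>+\<^sup>1) = o\<^sub>p(1)\<close>; and the linearization remainder of \<open>theta \<cdot> 0\<close> at \<open>\<beta>\<^sub>0\<close>,
  which is \<open>o\<^sub>p(\<parallel>\<delta>\<^sub>n\<parallel>)\<close>.
\<close>

section \<open>Outer probability\<close>

lemma outer_prob_covers_nonempty: "{S \<in> sets P. A \<inter> space P \<subseteq> S} \<noteq> {}"
  using sets.top by blast

lemma outer_prob_bdd_below: "bdd_below ((\<lambda>S. measure P S) ` {S \<in> sets P. A \<inter> space P \<subseteq> S})"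
  by (rule bdd_belowI[of _ 0]) auto

lemma outer_prob_nonneg: "0 \<le> outer_prob P A"
  unfolding outer_prob_def using outer_prob_covers_nonempty[of P A]
  by (intro cINF_greatest) auto

lemma outer_prob_le_measure: "S \<in> sets P \<Longrightarrow> A \<inter> space P \<subseteq> S \<Longrightarrow> outer_prob P A \<le> measure P S"
  unfolding outer_prob_def by (rule cINF_lower[OF outer_prob_bdd_below]) auto

lemma outer_prob_mono: "A \<subseteq> A' \<Longrightarrow> outer_prob P A \<le> outer_prob P A'"
  unfolding outer_prob_def
  by (intro cINF_greatest[OF outer_prob_covers_nonempty] cINF_lower[OF outer_prob_bdd_below]) auto

lemma outer_prob_empty: "outer_prob P {} = 0"
  using outer_prob_le_measure[of "{}" P "{}"] outer_prob_nonneg[of P "{}"] by simp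

lemma outer_prob_approx:
  assumes "e > 0"
  obtains S where "S \<in> sets P" "A \<inter> space P \<subseteq> S" "measure P S < outer_prob P A + e"
proof -
  have "(INF S\<in>{S \<in> sets P. A \<inter> space P \<subseteq> S}. measure P S) < outer_prob P A + e"
    using assms unfolding outer_prob_def by simp
  then show ?thesis
    using that unfolding cINF_less_iff[OF outer_prob_covers_nonempty outer_prob_bdd_below] by blast
qed

lemma outer_prob_Un_le: "outer_prob P (A \<union> A') \<le> outer_prob P A + outer_prob P A'"
proof (rule field_le_epsilon)
  fix e :: real assume "e > 0"
  then obtain S S' where S: "S \<in> sets P" "A \<inter> space P \<subseteq> S" "measure P S < outer_prob P A + e/2"
    and S': "S' \<in> sets P" "A' \<inter> space P \<subseteq> S'" "measure P S' < outer_prob P A' + e/2"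
    using outer_prob_approx[of "e/2" P A] outer_prob_approx[of "e/2" P A'] by (metis half_gt_zero)
  have "outer_prob P (A \<union> A') \<le> measure P (S \<union> S')"
    using S S' by (intro outer_prob_le_measure) auto
  also have "\<dots> \<le> measure P S + measure P S'"
    using S S' by (intro measure_Un_le) auto
  finally show "outer_prob P (A \<union> A') \<le> outer_prob P A + outer_prob P A' + e"
    using S S' by linarith
qed

lemma outer_exp_le_integral:
  assumes "g \<in> borel_measurable P" "integrable P g" "\<forall>\<omega>\<in>space P. 0 \<le> f \<omega> \<and> f \<omega> \<le> g \<omega>"
  shows "outer_exp P f \<le> integral\<^sup>L P g"
  unfolding outer_exp_def
proof (rule cINF_lower)
  show "bdd_below (integral\<^sup>L P ` {g \<in> borel_measurable P. integrable P g \<and> (\<forall>\<omega>\<in>space P. f \<omega> \<le> g \<omega>)})"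
    using assms(3) by (intro bdd_belowI[of _ 0]) (force intro!: integral_nonneg_AE)
qed (use assms in auto)

lemma outer_prob_le_outer_exp:
  assumes P: "prob_space P" and f: "\<forall>\<omega>\<in>space P. 0 \<le> f \<omega> \<and> f \<omega> \<le> 1"
    and A: "A \<subseteq> {\<omega> \<in> space P. 1 \<le> f \<omega>}"
  shows "outer_prob P A \<le> outer_exp P f"
  unfolding outer_exp_def
proof (rule cINF_greatest)
  show "{g \<in> borel_measurable P. integrable P g \<and> (\<forall>\<omega>\<in>space P. f \<omega> \<le> g \<omega>)} \<noteq> {}"
    using f finite_measure.integrable_const[OF prob_space.finite_measure[OF P], of "1::real"] by auto
next
  fix g assume g: "g \<in> {g \<in> borel_measurable P. integrable P g \<and> (\<forall>\<omega>\<in>space P. f \<omega> \<le> g \<omega>)}"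
  then have [measurable]: "g \<in> borel_measurable P" by simp
  have "outer_prob P A \<le> measure P {\<omega> \<in> space P. 1 \<le> g \<omega>}"
    using A g by (intro outer_prob_le_measure) force+
  also have "\<dots> \<le> integral\<^sup>L P g / 1"
    using g f by (intro integral_Markov_inequality_measure) force+
  finally show "outer_prob P A \<le> integral\<^sup>L P g" by simp
qed

lemma outer_prob_tendsto_zero_iff:
  "(\<lambda>n. outer_prob P (E n)) \<longlonglongrightarrow> 0 \<longleftrightarrow> (\<forall>\<tau>>0. \<forall>\<^sub>F n in sequentially. outer_prob P (E n) < \<tau>)"
  using outer_prob_nonneg[of P]
  by (auto simp: order_tendsto_iff intro: eventually_mono less_le_trans always_eventually)

lemma outer_prob_tendsto_zero_subset:
  assumes "(\<lambda>n. outer_prob P (E n)) \<longlonglongrightarrow> 0" "\<forall>\<^sub>F n in sequentially. E' n \<subseteq> E n"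
  shows "(\<lambda>n. outer_prob P (E' n)) \<longlonglongrightarrow> 0"
  by (rule tendsto_sandwich[OF _ _ tendsto_const assms(1)])
    (use assms(2) in \<open>auto simp: outer_prob_nonneg intro: eventually_mono outer_prob_mono\<close>)

lemma outer_prob_tendsto_zero_Un:
  assumes "(\<lambda>n. outer_prob P (E n)) \<longlonglongrightarrow> 0" "(\<lambda>n. outer_prob P (E' n)) \<longlonglongrightarrow> 0"
  shows "(\<lambda>n. outer_prob P (E n \<union> E' n)) \<longlonglongrightarrow> 0"
proof (rule tendsto_sandwich[OF _ _ tendsto_const])
  show "(\<lambda>n. outer_prob P (E n) + outer_prob P (E' n)) \<longlonglongrightarrow> 0"
    using tendsto_add[OF assms] by simp
qed (auto simp: outer_prob_nonneg outer_prob_Un_le)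

section \<open>Stochastic order symbols\<close>

lemma small_op_eventually_le:
  assumes Y: "small_op P Y r" and G: "(\<lambda>n. outer_prob P (G n)) \<longlonglongrightarrow> 0"
    and le: "\<forall>\<^sub>F n in sequentially. \<forall>\<omega>\<in>space P - G n. norm (X n \<omega>) \<le> norm (Y n \<omega>)"
  shows "small_op P X r"
  unfolding small_op_def
proof (intro allI impI)
  fix \<epsilon> :: real assume "\<epsilon> > 0"
  then have "(\<lambda>n. outer_prob P (G n \<union> {\<omega> \<in> space P. norm (Y n \<omega>) > \<epsilon> * r n \<omega>})) \<longlonglongrightarrow> 0"
    using Y unfolding small_op_def by (intro outer_prob_tendsto_zero_Un G) auto
  then show "(\<lambda>n. outer_prob P {\<omega> \<in> space P. norm (X n \<omega>) > \<epsilon> * r n \<omega>}) \<longlonglongrightarrow> 0"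
  proof (rule outer_prob_tendsto_zero_subset)
    show "\<forall>\<^sub>F n in sequentially. {\<omega> \<in> space P. norm (X n \<omega>) > \<epsilon> * r n \<omega>}
        \<subseteq> G n \<union> {\<omega> \<in> space P. norm (Y n \<omega>) > \<epsilon> * r n \<omega>}"
      using le by eventually_elim (auto dest: order.strict_trans2)
  qed
qed

lemma small_op_cong_eventually:
  assumes "small_op P Y r" "\<forall>\<^sub>F n in sequentially. \<forall>\<omega>\<in>space P. X n \<omega> = Y n \<omega>"
  shows "small_op P X r"
proof (rule small_op_eventually_le[OF assms(1), where G="\<lambda>_. {}"])
  show "\<forall>\<^sub>F n in sequentially. \<forall>\<omega>\<in>space P - {}. norm (X n \<omega>) \<le> norm (Y n \<omega>)"
    using assms(2) by eventually_elim simp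
qed (simp add: outer_prob_empty)

lemma small_op_add:
  assumes X: "small_op P X r" and Y: "small_op P Y r"
  shows "small_op P (\<lambda>n \<omega>. X n \<omega> + Y n \<omega>) r"
  unfolding small_op_def
proof (intro allI impI)
  fix \<epsilon> :: real assume "\<epsilon> > 0"
  then have "(\<lambda>n. outer_prob P ({\<omega> \<in> space P. norm (X n \<omega>) > \<epsilon>/2 * r n \<omega>}
                             \<union> {\<omega> \<in> space P. norm (Y n \<omega>) > \<epsilon>/2 * r n \<omega>})) \<longlonglongrightarrow> 0"
    using X Y half_gt_zero unfolding small_op_def by (intro outer_prob_tendsto_zero_Un) blast+
  then show "(\<lambda>n. outer_prob P {\<omega> \<in> space P. norm (X n \<omega> + Y n \<omega>) > \<epsilon> * r n \<omega>}) \<longlonglongrightarrow> 0"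
  proof (rule outer_prob_tendsto_zero_subset, intro always_eventually allI subsetI)
    fix n \<omega> assume "\<omega> \<in> {\<omega> \<in> space P. norm (X n \<omega> + Y n \<omega>) > \<epsilon> * r n \<omega>}"
    then show "\<omega> \<in> {\<omega> \<in> space P. norm (X n \<omega>) > \<epsilon>/2 * r n \<omega>} \<union> {\<omega> \<in> space P. norm (Y n \<omega>) > \<epsilon>/2 * r n \<omega>}"
      using norm_triangle_ineq[of "X n \<omega>" "Y n \<omega>"] by auto
  qed
qed

lemma small_op_uminus: "small_op P X r \<Longrightarrow> small_op P (\<lambda>n \<omega>. - X n \<omega>) r"
  by (rule small_op_eventually_le[where G="\<lambda>_. {}"]) (auto simp: outer_prob_empty)

lemma small_op_diff:
  assumes "small_op P X r" "small_op P Y r"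
  shows "small_op P (\<lambda>n \<omega>. X n \<omega> - Y n \<omega>) r"
  using small_op_add[OF assms(1) small_op_uminus[OF assms(2)]] by simp

lemma small_op_zero:
  assumes "\<forall>n \<omega>. 0 \<le> r n \<omega>"
  shows "small_op P (\<lambda>_ _. 0 :: 'a::real_normed_vector) r"
  unfolding small_op_def
proof (intro allI impI)
  fix \<epsilon> :: real assume "\<epsilon> > 0"
  with assms have "0 \<le> \<epsilon> * r n \<omega>" for n \<omega> by simp
  then have empty: "{\<omega> \<in> space P. norm (0::'a) > \<epsilon> * r n \<omega>} = {}" for n
    by (auto simp: not_less)
  show "(\<lambda>n. outer_prob P {\<omega> \<in> space P. norm (0::'a) > \<epsilon> * r n \<omega>}) \<longlonglongrightarrow> 0"
    unfolding empty outer_prob_empty by simp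
qed

lemma small_op_scaleR:
  assumes r: "\<forall>n \<omega>. 0 \<le> r n \<omega>" and X: "small_op P X r"
  shows "small_op P (\<lambda>n \<omega>. c *\<^sub>R X n \<omega>) r"
  unfolding small_op_def
proof (intro allI impI)
  fix \<epsilon> :: real assume \<epsilon>: "\<epsilon> > 0"
  have "\<epsilon> / (\<bar>c\<bar> + 1) > 0"
    using \<epsilon> by (simp add: add_pos_nonneg)
  then have "(\<lambda>n. outer_prob P {\<omega> \<in> space P. norm (X n \<omega>) > \<epsilon> / (\<bar>c\<bar> + 1) * r n \<omega>}) \<longlonglongrightarrow> 0"
    using X unfolding small_op_def by blast
  then show "(\<lambda>n. outer_prob P {\<omega> \<in> space P. norm (c *\<^sub>R X n \<omega>) > \<epsilon> * r n \<omega>}) \<longlonglongrightarrow> 0"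
  proof (rule outer_prob_tendsto_zero_subset, intro always_eventually allI subsetI)
    fix n \<omega> assume \<omega>: "\<omega> \<in> {\<omega> \<in> space P. norm (c *\<^sub>R X n \<omega>) > \<epsilon> * r n \<omega>}"
    show "\<omega> \<in> {\<omega> \<in> space P. norm (X n \<omega>) > \<epsilon> / (\<bar>c\<bar> + 1) * r n \<omega>}"
    proof (rule ccontr)
      assume "\<omega> \<notin> {\<omega> \<in> space P. norm (X n \<omega>) > \<epsilon> / (\<bar>c\<bar> + 1) * r n \<omega>}"
      then have "norm (X n \<omega>) \<le> \<epsilon> / (\<bar>c\<bar> + 1) * r n \<omega>"
        using \<omega> by auto
      then have "\<bar>c\<bar> * norm (X n \<omega>) \<le> \<bar>c\<bar> * (\<epsilon> / (\<bar>c\<bar> + 1) * r n \<omega>)"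
        by (rule mult_left_mono) simp
      also have "\<dots> = \<bar>c\<bar> / (\<bar>c\<bar> + 1) * (\<epsilon> * r n \<omega>)"
        by simp
      also have "\<dots> \<le> \<epsilon> * r n \<omega>"
        using r \<epsilon> by (intro mult_left_le_one_le) auto
      finally show False
        using \<omega> by simp
    qed
  qed
qed

lemma small_op_sum:
  assumes "finite I" "\<forall>n \<omega>. 0 \<le> r n \<omega>" "\<forall>i\<in>I. small_op P (X i) r"
  shows "small_op P (\<lambda>n \<omega>. \<Sum>i\<in>I. X i n \<omega>) r"
  using assms
proof (induction I rule: finite_induct)
  case empty
  then show ?case
    using small_op_zero by simp
next
  case (insert i I)
  then show ?case
    using small_op_add[of P "X i" r "\<lambda>n \<omega>. \<Sum>i\<in>I. X i n \<omega>"] by simp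
qed

lemma small_op_rate_mono:
  assumes "\<forall>n \<omega>. r n \<omega> \<le> r' n \<omega>" "small_op P X r"
  shows "small_op P X r'"
  unfolding small_op_def
proof (intro allI impI)
  fix \<epsilon> :: real assume "\<epsilon> > 0"
  then have "(\<lambda>n. outer_prob P {\<omega> \<in> space P. norm (X n \<omega>) > \<epsilon> * r n \<omega>}) \<longlonglongrightarrow> 0"
    using assms(2) unfolding small_op_def by blast
  then show "(\<lambda>n. outer_prob P {\<omega> \<in> space P. norm (X n \<omega>) > \<epsilon> * r' n \<omega>}) \<longlonglongrightarrow> 0"
  proof (rule outer_prob_tendsto_zero_subset, intro always_eventually allI subsetI)
    fix n \<omega> assume "\<omega> \<in> {\<omega> \<in> space P. norm (X n \<omega>) > \<epsilon> * r' n \<omega>}"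
    moreover have "\<epsilon> * r n \<omega> \<le> \<epsilon> * r' n \<omega>"
      using assms(1) \<open>\<epsilon> > 0\<close> by simp
    ultimately show "\<omega> \<in> {\<omega> \<in> space P. norm (X n \<omega>) > \<epsilon> * r n \<omega>}"
      by simp
  qed
qed

lemma small_op_scaleR_rate:
  assumes "\<forall>n \<omega>. 0 \<le> a n \<omega>" "small_op P X r"
  shows "small_op P (\<lambda>n \<omega>. a n \<omega> *\<^sub>R X n \<omega>) (\<lambda>n \<omega>. a n \<omega> * r n \<omega>)"
  unfolding small_op_def
proof (intro allI impI)
  fix \<epsilon> :: real assume "\<epsilon> > 0"
  with assms have "(\<lambda>n. outer_prob P {\<omega> \<in> space P. norm (X n \<omega>) > \<epsilon> * r n \<omega>}) \<longlonglongrightarrow> 0"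
    unfolding small_op_def by auto
  then show "(\<lambda>n. outer_prob P {\<omega> \<in> space P. norm (a n \<omega> *\<^sub>R X n \<omega>) > \<epsilon> * (a n \<omega> * r n \<omega>)}) \<longlonglongrightarrow> 0"
  proof (rule outer_prob_tendsto_zero_subset, intro always_eventually allI subsetI)
    fix n \<omega> assume "\<omega> \<in> {\<omega> \<in> space P. norm (a n \<omega> *\<^sub>R X n \<omega>) > \<epsilon> * (a n \<omega> * r n \<omega>)}"
    then have "a n \<omega> * (\<epsilon> * r n \<omega>) < a n \<omega> * norm (X n \<omega>)" "\<omega> \<in> space P"
      using assms(1) by (auto simp: mult.left_commute)
    then show "\<omega> \<in> {\<omega> \<in> space P. norm (X n \<omega>) > \<epsilon> * r n \<omega>}"
      using assms(1) by (auto dest: mult_left_less_imp_less)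
  qed
qed

lemma small_op_derivative_remainder:
  assumes f: "(f has_derivative f') (at x)" and h: "small_op P h (\<lambda>_ _. 1)"
  shows "small_op P (\<lambda>n \<omega>. f (x + h n \<omega>) - f x - f' (h n \<omega>)) (\<lambda>n \<omega>. norm (h n \<omega>))"
  unfolding small_op_def
proof (intro allI impI)
  fix \<epsilon> :: real assume "\<epsilon> > 0"
  then obtain d where "d > 0"
    and d: "\<forall>y. norm (y - x) < d \<longrightarrow> norm (f y - f x - f' (y - x)) \<le> \<epsilon> * norm (y - x)"
    using f unfolding has_derivative_at_alt by blast
  have "(\<lambda>n. outer_prob P {\<omega> \<in> space P. norm (h n \<omega>) > d/2 * 1}) \<longlonglongrightarrow> 0"
    using h half_gt_zero[OF \<open>d > 0\<close>] unfolding small_op_def by blast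
  then show "(\<lambda>n. outer_prob P {\<omega> \<in> space P.
      norm (f (x + h n \<omega>) - f x - f' (h n \<omega>)) > \<epsilon> * norm (h n \<omega>)}) \<longlonglongrightarrow> 0"
  proof (rule outer_prob_tendsto_zero_subset, intro always_eventually allI subsetI)
    fix n \<omega> assume \<omega>: "\<omega> \<in> {\<omega> \<in> space P. norm (f (x + h n \<omega>) - f x - f' (h n \<omega>)) > \<epsilon> * norm (h n \<omega>)}"
    show "\<omega> \<in> {\<omega> \<in> space P. norm (h n \<omega>) > d/2 * 1}"
    proof (rule ccontr)
      assume "\<omega> \<notin> {\<omega> \<in> space P. norm (h n \<omega>) > d/2 * 1}"
      then have "norm (h n \<omega>) < d"
        using \<omega> \<open>d > 0\<close> by auto
      then show False
        using d[rule_format, of "x + h n \<omega>"] \<omega> by simp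
    qed
  qed
qed

lemma small_op_root_n_scaled:
  assumes "small_op P \<delta> (\<lambda>n _. sqrt (real n))"
  shows "small_op P (\<lambda>n \<omega>. (1 / sqrt (real n)) *\<^sub>R \<delta> n \<omega>) (\<lambda>_ _. 1)"
proof -
  have "small_op P (\<lambda>n \<omega>. (1 / sqrt (real n)) *\<^sub>R \<delta> n \<omega>) (\<lambda>n \<omega>. 1 / sqrt (real n) * sqrt (real n))"
    using small_op_scaleR_rate[OF _ assms, of "\<lambda>n \<omega>. 1 / sqrt (real n)"] by simp
  then show ?thesis
    by (rule small_op_rate_mono[rotated]) simp
qed

lemma small_op_root_n_linearization:
  assumes f: "(f has_derivative f') (at x)" and \<delta>: "small_op P \<delta> (\<lambda>n _. sqrt (real n))"
  shows "small_op P (\<lambda>n \<omega>. sqrt (real n) *\<^sub>R (f (x + (1 / sqrt (real n)) *\<^sub>R \<delta> n \<omega>) - f x) - f' (\<delta> n \<omega>))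
    (\<lambda>n \<omega>. norm (\<delta> n \<omega>))"
proof -
  let ?h = "\<lambda>n \<omega>. (1 / sqrt (real n)) *\<^sub>R \<delta> n \<omega>"
  have h: "small_op P ?h (\<lambda>_ _. 1)"
    using \<delta> by (rule small_op_root_n_scaled)
  have "small_op P (\<lambda>n \<omega>. sqrt (real n) *\<^sub>R (f (x + ?h n \<omega>) - f x - f' (?h n \<omega>)))
      (\<lambda>n \<omega>. sqrt (real n) * norm (?h n \<omega>))"
    by (intro small_op_scaleR_rate small_op_derivative_remainder[OF f h]) simp
  then have remainder: "small_op P (\<lambda>n \<omega>. sqrt (real n) *\<^sub>R (f (x + ?h n \<omega>) - f x - f' (?h n \<omega>)))
      (\<lambda>n \<omega>. norm (\<delta> n \<omega>))"
    by (rule small_op_rate_mono[rotated]) simp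
  \<comment> \<open>only for \<open>n \<ge> 1\<close>: at \<open>n = 0\<close> the factor \<open>1 / sqrt 0\<close> is \<open>0\<close>\<close>
  have linear: "sqrt (real n) *\<^sub>R f' (?h n \<omega>) = f' (\<delta> n \<omega>)" if "n \<ge> 1" for n \<omega>
    using that linear_cmul[OF has_derivative_linear[OF f]] by simp
  show ?thesis
    by (rule small_op_cong_eventually[OF remainder])
      (use eventually_ge_at_top[of 1] in \<open>eventually_elim, simp add: linear scaleR_diff_right\<close>)
qed

lemma small_op_root_n_bias:
  assumes bias: "\<forall>b\<in>B. \<forall>l\<in>{0..\<epsilon>0}. norm (f b l) \<le> C * l ^ p"
    and rem: "small_op P (\<lambda>n \<omega>. sqrt (real n) * lam n \<omega> ^ p) (\<lambda>_ _. 1)"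
    and G: "(\<lambda>n. outer_prob P (G n)) \<longlonglongrightarrow> 0"
    and good: "\<And>n \<omega>. \<omega> \<in> space P - G n \<Longrightarrow> b n \<omega> \<in> B \<and> lam n \<omega> \<in> {0..\<epsilon>0}"
  shows "small_op P (\<lambda>n \<omega>. sqrt (real n) *\<^sub>R f (b n \<omega>) (lam n \<omega>)) (\<lambda>_ _. 1)"
proof (rule small_op_eventually_le[OF small_op_scaleR[where c=C, OF _ rem] G])
  show "\<forall>\<^sub>F n in sequentially. \<forall>\<omega>\<in>space P - G n.
      norm (sqrt (real n) *\<^sub>R f (b n \<omega>) (lam n \<omega>)) \<le> norm (C *\<^sub>R (sqrt (real n) * lam n \<omega> ^ p))"
  proof (intro always_eventually allI ballI)
    fix n \<omega> assume "\<omega> \<in> space P - G n"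
    then have "norm (f (b n \<omega>) (lam n \<omega>)) \<le> C * lam n \<omega> ^ p"
      using bias good by blast
    then have "sqrt (real n) * norm (f (b n \<omega>) (lam n \<omega>)) \<le> sqrt (real n) * (C * lam n \<omega> ^ p)"
      by (simp add: mult_left_mono)
    also have "\<dots> \<le> \<bar>C * (sqrt (real n) * lam n \<omega> ^ p)\<bar>"
      by (simp add: mult.left_commute)
    finally show "norm (sqrt (real n) *\<^sub>R f (b n \<omega>) (lam n \<omega>)) \<le> norm (C *\<^sub>R (sqrt (real n) * lam n \<omega> ^ p))"
      by simp
  qed
qed simp

lemma op_unif_of_tight_bound:
  fixes X :: "nat \<Rightarrow> 'i \<Rightarrow> 'w \<Rightarrow> 'a::real_normed_vector"
  assumes tight: "\<And>\<tau>. \<tau> > 0 \<Longrightarrow> \<exists>c. \<forall>\<^sub>F n in sequentially. outer_prob P {\<omega> \<in> space P. c < Z n \<omega>} < \<tau>"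
    and K: "K > 0"
    and bound: "\<And>n s \<omega>. n \<ge> 1 \<Longrightarrow> \<omega> \<in> space P \<Longrightarrow> s \<in> S \<Longrightarrow> norm (X n s \<omega>) \<le> K * Z n \<omega> / sqrt (real n)"
  shows "op_unif P S X"
  unfolding op_unif_def outer_prob_tendsto_zero_iff
proof (intro allI impI)
  fix \<epsilon> \<tau> :: real assume "\<epsilon> > 0" "\<tau> > 0"
  then obtain c where c: "\<forall>\<^sub>F n in sequentially. outer_prob P {\<omega> \<in> space P. c < Z n \<omega>} < \<tau>"
    using tight by blast
  have "\<forall>\<^sub>F n in sequentially. K * c / \<epsilon> \<le> sqrt (real n) \<and> 1 \<le> n"
    using eventually_ge_at_top[of "nat \<lceil>(K * c / \<epsilon>)\<^sup>2\<rceil> + 1"]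
  proof eventually_elim
    case (elim n)
    then have "(K * c / \<epsilon>)\<^sup>2 \<le> real n"
      by linarith
    then show ?case
      using elim real_le_rsqrt by auto
  qed
  with c show "\<forall>\<^sub>F n in sequentially. outer_prob P {\<omega> \<in> space P. \<exists>s\<in>S. \<epsilon> < norm (X n s \<omega>)} < \<tau>"
  proof eventually_elim
    case (elim n)
    have "{\<omega> \<in> space P. \<exists>s\<in>S. \<epsilon> < norm (X n s \<omega>)} \<subseteq> {\<omega> \<in> space P. c < Z n \<omega>}"
    proof safe
      fix \<omega> s assume \<omega>: "\<omega> \<in> space P" and "s \<in> S" and "\<epsilon> < norm (X n s \<omega>)"
      then have "\<epsilon> < K * Z n \<omega> / sqrt (real n)"
        using bound[of n \<omega> s] elim by linarith
      then have "\<epsilon> * sqrt (real n) < K * Z n \<omega>"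
        using elim by (simp add: less_divide_eq)
      moreover have "K * c \<le> \<epsilon> * sqrt (real n)"
        using elim \<open>\<epsilon> > 0\<close> by (simp add: divide_le_eq mult.commute)
      ultimately have "K * c < K * Z n \<omega>"
        by linarith
      then show "c < Z n \<omega>"
        using K by (simp add: mult_less_cancel_left_pos)
    qed
    then show ?case
      using elim by (blast intro: order.strict_trans1[OF outer_prob_mono])
  qed
qed

lemma big_Op_of_local_power_bound:
  assumes lam: "small_op P lam (\<lambda>_ _. 1)" "\<forall>n. \<forall>\<omega>\<in>space P. 0 \<le> lam n \<omega>"
    and \<epsilon>0: "\<epsilon>0 > 0" and bound: "\<forall>l\<in>{0..\<epsilon>0}. norm (f l) \<le> C * l ^ p"
  shows "big_Op P (\<lambda>n \<omega>. f (lam n \<omega>)) (\<lambda>n \<omega>. lam n \<omega> ^ p)"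
  unfolding big_Op_def
proof (intro allI impI)
  fix \<tau> :: real assume "\<tau> > 0"
  with lam(1) \<epsilon>0 have "\<forall>\<^sub>F n in sequentially. outer_prob P {\<omega> \<in> space P. norm (lam n \<omega>) > \<epsilon>0 * 1} < \<tau>"
    unfolding small_op_def outer_prob_tendsto_zero_iff by blast
  then obtain N where N: "\<forall>n\<ge>N. outer_prob P {\<omega> \<in> space P. norm (lam n \<omega>) > \<epsilon>0 * 1} < \<tau>"
    unfolding eventually_sequentially by blast
  have "{\<omega> \<in> space P. norm (f (lam n \<omega>)) > C * lam n \<omega> ^ p}
      \<subseteq> {\<omega> \<in> space P. norm (lam n \<omega>) > \<epsilon>0 * 1}" for n
  proof safe
    fix \<omega> assume \<omega>: "\<omega> \<in> space P" "norm (f (lam n \<omega>)) > C * lam n \<omega> ^ p"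
    show "norm (lam n \<omega>) > \<epsilon>0 * 1"
    proof (rule ccontr)
      assume "\<not> norm (lam n \<omega>) > \<epsilon>0 * 1"
      then have "lam n \<omega> \<in> {0..\<epsilon>0}"
        using lam(2) \<omega>(1) by auto
      then show False
        using bound \<omega>(2) by (meson not_less)
    qed
  qed
  then show "\<exists>K N. \<forall>n\<ge>N. outer_prob P {\<omega> \<in> space P. norm (f (lam n \<omega>)) > K * lam n \<omega> ^ p} < \<tau>"
    using N by (blast intro: order.strict_trans1[OF outer_prob_mono])
qed

section \<open>Suprema and moduli of continuity of bounded paths\<close>

definition path_sup :: "nat \<Rightarrow> 'i set \<Rightarrow> (nat \<Rightarrow> 'i \<Rightarrow> 'a::real_normed_vector) \<Rightarrow> real" where
  "path_sup M S F = (SUP (m, s)\<in>{..M} \<times> S. norm (F m s))"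

definition close_pairs :: "nat \<Rightarrow> 'i::metric_space set \<Rightarrow> real \<Rightarrow> (nat \<times> 'i \<times> 'i) set" where
  "close_pairs M S \<eta> = {(m, s, t). m \<le> M \<and> s \<in> S \<and> t \<in> S \<and> dist s t < \<eta>}"

definition path_modulus ::
    "nat \<Rightarrow> 'i::metric_space set \<Rightarrow> real \<Rightarrow> (nat \<Rightarrow> 'i \<Rightarrow> 'a::real_normed_vector) \<Rightarrow> real" where
  "path_modulus M S \<eta> F = (SUP (m, s, t)\<in>close_pairs M S \<eta>. norm (F m s - F m t))"

lemma bdd_pathsE:
  assumes "F \<in> bdd_paths M S"
  obtains K where "\<And>m s. m \<le> M \<Longrightarrow> s \<in> S \<Longrightarrow> norm (F m s) \<le> K"
proof -
  have "bounded (\<Union>m\<in>{..M}. F m ` S)"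
    using assms unfolding bdd_paths_def by (intro bounded_UN) auto
  then show ?thesis
    using that unfolding bounded_iff by blast
qed

lemma bdd_paths_subset: "F \<in> bdd_paths M S \<Longrightarrow> T \<subseteq> S \<Longrightarrow> F \<in> bdd_paths M T"
  unfolding bdd_paths_def by (blast intro: bounded_subset image_mono)

lemma path_sup_upper:
  assumes "F \<in> bdd_paths M S" "m \<le> M" "s \<in> S"
  shows "norm (F m s) \<le> path_sup M S F"
proof -
  obtain K where "\<And>m s. m \<le> M \<Longrightarrow> s \<in> S \<Longrightarrow> norm (F m s) \<le> K"
    using bdd_pathsE[OF assms(1)] by blast
  then show ?thesis
    unfolding path_sup_def using assms
    by (intro cSUP_upper2[where x="(m, s)"] bdd_aboveI[of _ K]) auto
qed

lemma path_sup_least: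
  "S \<noteq> {} \<Longrightarrow> (\<And>m s. m \<le> M \<Longrightarrow> s \<in> S \<Longrightarrow> norm (F m s) \<le> c) \<Longrightarrow> path_sup M S F \<le> c"
  unfolding path_sup_def by (intro cSUP_least) auto

lemma close_pairs_nonempty: "s \<in> S \<Longrightarrow> \<eta> > 0 \<Longrightarrow> close_pairs M S \<eta> \<noteq> {}"
  unfolding close_pairs_def by (intro ex_in_conv[THEN iffD1] exI[of _ "(0, s, s)"]) simp

lemma path_modulus_upper:
  assumes "F \<in> bdd_paths M S" "m \<le> M" "s \<in> S" "t \<in> S" "dist s t < \<eta>"
  shows "norm (F m s - F m t) \<le> path_modulus M S \<eta> F"
proof -
  obtain K where K: "\<And>m s. m \<le> M \<Longrightarrow> s \<in> S \<Longrightarrow> norm (F m s) \<le> K"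
    using bdd_pathsE[OF assms(1)] by blast
  have "norm (F m s - F m t) \<le> 2 * K" if "m \<le> M" "s \<in> S" "t \<in> S" for m s t
    using norm_triangle_ineq4[of "F m s" "F m t"] K[of m s] K[of m t] that by linarith
  then show ?thesis
    unfolding path_modulus_def using assms
    by (intro cSUP_upper2[where x="(m, s, t)"] bdd_aboveI[of _ "2 * K"]) (auto simp: close_pairs_def)
qed

lemma path_modulus_least:
  assumes "S \<noteq> {}" "\<eta> > 0"
    and "\<And>m s t. m \<le> M \<Longrightarrow> s \<in> S \<Longrightarrow> t \<in> S \<Longrightarrow> dist s t < \<eta> \<Longrightarrow> norm (F m s - F m t) \<le> c"
  shows "path_modulus M S \<eta> F \<le> c"
proof -
  obtain s where "s \<in> S" using assms(1) by blast
  then show ?thesis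
    unfolding path_modulus_def using assms(3)
    by (intro cSUP_least[OF close_pairs_nonempty[OF _ assms(2)]]) (auto simp: close_pairs_def)
qed

lemma path_modulus_nonneg:
  assumes "F \<in> bdd_paths M S" "S \<noteq> {}" "\<eta> > 0"
  shows "0 \<le> path_modulus M S \<eta> F"
proof -
  obtain s where "s \<in> S" using assms(2) by blast
  then show ?thesis
    using path_modulus_upper[OF assms(1), of 0 s s \<eta>] assms(3) by simp
qed

lemma sup_dist_upper:
  assumes "F \<in> bdd_paths M S" "G \<in> bdd_paths M S" "m \<le> M" "s \<in> S"
  shows "norm (F m s - G m s) \<le> sup_dist M S F G"
proof -
  obtain K K' where K: "\<And>m s. m \<le> M \<Longrightarrow> s \<in> S \<Longrightarrow> norm (F m s) \<le> K"
    and K': "\<And>m s. m \<le> M \<Longrightarrow> s \<in> S \<Longrightarrow> norm (G m s) \<le> K'"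
    using bdd_pathsE[OF assms(1)] bdd_pathsE[OF assms(2)] by metis
  have "norm (F m s - G m s) \<le> K + K'" if "m \<le> M" "s \<in> S" for m s
    using norm_triangle_ineq4[of "F m s" "G m s"] K[OF that] K'[OF that] by linarith
  then show ?thesis
    unfolding sup_dist_def using assms
    by (intro cSUP_upper2[where x="(m, s)"] bdd_aboveI[of _ "K + K'"]) auto
qed

lemma sup_dist_commute: "sup_dist M S F G = sup_dist M S G F"
  unfolding sup_dist_def by (simp add: norm_minus_commute)

lemma sup_dist_nonneg:
  assumes "F \<in> bdd_paths M S" "G \<in> bdd_paths M S" "S \<noteq> {}"
  shows "0 \<le> sup_dist M S F G"
proof -
  obtain s where "s \<in> S" using assms(3) by blast
  then show ?thesis
    using sup_dist_upper[OF assms(1,2), of 0 s] norm_ge_zero order_trans by blast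
qed

lemma path_sup_lipschitz:
  assumes "F \<in> bdd_paths M S" "G \<in> bdd_paths M S" "S \<noteq> {}"
  shows "path_sup M S F - path_sup M S G \<le> sup_dist M S F G"
proof -
  have "path_sup M S F \<le> path_sup M S G + sup_dist M S F G"
  proof (rule path_sup_least[OF assms(3)])
    fix m s assume ms: "m \<le> M" "s \<in> S"
    show "norm (F m s) \<le> path_sup M S G + sup_dist M S F G"
      using norm_triangle_sub[of "F m s" "G m s"]
        path_sup_upper[OF assms(2) ms] sup_dist_upper[OF assms(1,2) ms] by linarith
  qed
  then show ?thesis by simp
qed

lemma path_modulus_lipschitz:
  assumes "F \<in> bdd_paths M S" "G \<in> bdd_paths M S" "S \<noteq> {}" "\<eta> > 0"
  shows "path_modulus M S \<eta> F - path_modulus M S \<eta> G \<le> 2 * sup_dist M S F G"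
proof -
  have "path_modulus M S \<eta> F \<le> path_modulus M S \<eta> G + 2 * sup_dist M S F G"
  proof (rule path_modulus_least[OF assms(3,4)])
    fix m s t assume mst: "m \<le> M" "s \<in> S" "t \<in> S" "dist s t < \<eta>"
    have eq: "F m s - F m t = (G m s - G m t) + (F m s - G m s) - (F m t - G m t)"
      by (simp add: algebra_simps)
    have "norm (F m s - F m t) \<le> norm ((G m s - G m t) + (F m s - G m s)) + norm (F m t - G m t)"
      unfolding eq by (rule norm_triangle_ineq4)
    also have "\<dots> \<le> norm (G m s - G m t) + norm (F m s - G m s) + norm (F m t - G m t)"
      using norm_triangle_ineq[of "G m s - G m t" "F m s - G m s"] by linarith
    finally show "norm (F m s - F m t) \<le> path_modulus M S \<eta> G + 2 * sup_dist M S F G"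
      using path_modulus_upper[OF assms(2) mst] sup_dist_upper[OF assms(1,2) mst(1,2)]
        sup_dist_upper[OF assms(1,2) mst(1,3)] by linarith
  qed
  then show ?thesis by simp
qed

lemma cSUP_le_cSUP_dense:
  fixes g :: "'a \<Rightarrow> real"
  assumes "T \<subseteq> X" "T \<noteq> {}" "X \<noteq> {}" "bdd_above (g ` X)"
    and approx: "\<And>x e. x \<in> X \<Longrightarrow> e > 0 \<Longrightarrow> \<exists>y\<in>T. g x \<le> g y + e"
  shows "(SUP x\<in>X. g x) \<le> (SUP y\<in>T. g y)"
proof (rule cSUP_least[OF assms(3)])
  fix x assume x: "x \<in> X"
  have bdd: "bdd_above (g ` T)"
    using assms(1,4) by (meson bdd_above_mono image_mono)
  show "g x \<le> (SUP y\<in>T. g y)"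
  proof (rule field_le_epsilon)
    fix e :: real assume "e > 0"
    then obtain y where "y \<in> T" "g x \<le> g y + e"
      using approx x by blast
    then show "g x \<le> (SUP y\<in>T. g y) + e"
      using cSUP_upper[OF \<open>y \<in> T\<close> bdd] by linarith
  qed
qed

lemma path_sup_le_dense:
  assumes F: "F \<in> bdd_paths M S" "\<forall>m\<le>M. continuous_on S (F m)"
    and T: "T \<subseteq> S" "T \<noteq> {}" "\<forall>s\<in>S. \<forall>e>0. \<exists>s'\<in>T. dist s' s < e"
  shows "path_sup M S F \<le> path_sup M T F"
  unfolding path_sup_def
proof (rule cSUP_le_cSUP_dense)
  obtain K where K: "\<And>m s. m \<le> M \<Longrightarrow> s \<in> S \<Longrightarrow> norm (F m s) \<le> K"
    using bdd_pathsE[OF F(1)] by blast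
  show "bdd_above ((\<lambda>(m, s). norm (F m s)) ` ({..M} \<times> S))"
    using K by (intro bdd_aboveI[of _ K]) auto
  fix x and e :: real assume x: "x \<in> {..M} \<times> S" and "e > 0"
  then obtain m s where ms: "x = (m, s)" "m \<le> M" "s \<in> S" by auto
  then obtain d where "d > 0" and d: "\<forall>s'\<in>S. dist s' s < d \<longrightarrow> dist (F m s') (F m s) < e"
    using F(2) \<open>e > 0\<close> unfolding continuous_on_iff by blast
  then obtain s' where s': "s' \<in> T" "dist s' s < d"
    using T(3) ms(3) by blast
  then have "norm (F m s) \<le> norm (F m s') + e"
    using d T(1) norm_triangle_sub[of "F m s" "F m s'"] by (force simp: dist_norm norm_minus_commute)
  then show "\<exists>y\<in>{..M} \<times> T. (case x of (m, s) \<Rightarrow> norm (F m s)) \<le> (case y of (m, s) \<Rightarrow> norm (F m s)) + e"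
    using ms s' by (intro bexI[of _ "(m, s')"]) auto
qed (use T in auto)

lemma path_modulus_le_dense:
  assumes F: "F \<in> bdd_paths M S" "\<forall>m\<le>M. continuous_on S (F m)"
    and T: "T \<subseteq> S" "T \<noteq> {}" "\<forall>s\<in>S. \<forall>e>0. \<exists>s'\<in>T. dist s' s < e"
    and "\<eta> > 0"
  shows "path_modulus M S \<eta> F \<le> path_modulus M T \<eta> F"
  unfolding path_modulus_def
proof (rule cSUP_le_cSUP_dense)
  obtain K where K: "\<And>m s. m \<le> M \<Longrightarrow> s \<in> S \<Longrightarrow> norm (F m s) \<le> K"
    using bdd_pathsE[OF F(1)] by blast
  show "bdd_above ((\<lambda>(m, s, t). norm (F m s - F m t)) ` close_pairs M S \<eta>)"
  proof (rule bdd_aboveI[of _ "2 * K"], clarsimp simp: close_pairs_def)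
    fix m s t assume "m \<le> M" "s \<in> S" "t \<in> S"
    then show "norm (F m s - F m t) \<le> 2 * K"
      using norm_triangle_ineq4[of "F m s" "F m t"] K[of m s] K[of m t] by linarith
  qed
  fix x and e :: real assume x: "x \<in> close_pairs M S \<eta>" and "e > 0"
  then obtain m s t where mst: "x = (m, s, t)" "m \<le> M" "s \<in> S" "t \<in> S" "dist s t < \<eta>"
    by (auto simp: close_pairs_def)
  obtain d1 where "d1 > 0" and d1: "\<forall>s'\<in>S. dist s' s < d1 \<longrightarrow> dist (F m s') (F m s) < e/2"
    using F(2) mst \<open>e > 0\<close> unfolding continuous_on_iff by (meson half_gt_zero)
  obtain d2 where "d2 > 0" and d2: "\<forall>t'\<in>S. dist t' t < d2 \<longrightarrow> dist (F m t') (F m t) < e/2"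
    using F(2) mst \<open>e > 0\<close> unfolding continuous_on_iff by (meson half_gt_zero)
  define \<rho> where "\<rho> = min (min d1 d2) ((\<eta> - dist s t) / 2)"
  have \<rho>: "\<rho> > 0" "\<rho> \<le> d1" "\<rho> \<le> d2" "2 * \<rho> \<le> \<eta> - dist s t"
    using \<open>d1 > 0\<close> \<open>d2 > 0\<close> mst(5) unfolding \<rho>_def by (auto simp: min_def)
  obtain s' t' where s': "s' \<in> T" "dist s' s < \<rho>" and t': "t' \<in> T" "dist t' t < \<rho>"
    using T(3) mst(3,4) \<rho>(1) by meson
  have "dist s' t' \<le> dist s' s + dist s t + dist t' t"
    using dist_triangle[of s' t' s] dist_triangle[of s t' t] by (simp add: dist_commute)
  then have close: "(m, s', t') \<in> close_pairs M T \<eta>"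
    using mst s' t' \<rho> by (auto simp: close_pairs_def)
  have "dist (F m s') (F m s) < e/2" "dist (F m t') (F m t) < e/2"
    using d1 d2 s' t' \<rho> T(1) by auto
  moreover have "F m s - F m t = (F m s' - F m t') - (F m s' - F m s) + (F m t' - F m t)"
    by (simp add: algebra_simps)
  then have "norm (F m s - F m t) \<le> norm ((F m s' - F m t') - (F m s' - F m s)) + norm (F m t' - F m t)"
    by (metis norm_triangle_ineq)
  then have "norm (F m s - F m t) \<le> norm (F m s' - F m t') + norm (F m s' - F m s) + norm (F m t' - F m t)"
    using norm_triangle_ineq4[of "F m s' - F m t'" "F m s' - F m s"] by linarith
  ultimately have "norm (F m s - F m t) \<le> norm (F m s' - F m t') + e"
    by (simp add: dist_norm)
  then show "\<exists>y\<in>close_pairs M T \<eta>. (case x of (m, s, t) \<Rightarrow> norm (F m s - F m t))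
      \<le> (case y of (m, s, t) \<Rightarrow> norm (F m s - F m t)) + e"
    using close mst by (intro bexI[of _ "(m, s', t')"]) auto
next
  show "close_pairs M T \<eta> \<subseteq> close_pairs M S \<eta>"
    using T(1) by (auto simp: close_pairs_def)
  obtain s where "s \<in> T" using T(2) by blast
  then show "close_pairs M T \<eta> \<noteq> {}" "close_pairs M S \<eta> \<noteq> {}"
    using T(1) \<open>\<eta> > 0\<close> close_pairs_nonempty by blast+
qed

lemma borel_measurable_path_sup:
  fixes Psi :: "'v \<Rightarrow> nat \<Rightarrow> 'i \<Rightarrow> 'a::euclidean_space"
  assumes "countable T" "\<forall>m\<le>M. \<forall>s\<in>T. (\<lambda>v. Psi v m s) \<in> borel_measurable Q"
    and "\<forall>v\<in>space Q. Psi v \<in> bdd_paths M T"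
  shows "(\<lambda>v. path_sup M T (Psi v)) \<in> borel_measurable Q"
  unfolding path_sup_def
proof (rule borel_measurable_cSUP)
  show "countable ({..M} \<times> T)"
    using assms(1) by simp
  fix i assume "i \<in> {..M} \<times> T"
  then obtain m s where i: "i = (m, s)" and [measurable]: "(\<lambda>v. Psi v m s) \<in> borel_measurable Q"
    using assms(2) by blast
  show "(\<lambda>v. case i of (m, s) \<Rightarrow> norm (Psi v m s)) \<in> borel_measurable Q"
    unfolding i by simp measurable
next
  fix v assume "v \<in> space Q"
  then obtain K where "\<And>m s. m \<le> M \<Longrightarrow> s \<in> T \<Longrightarrow> norm (Psi v m s) \<le> K"
    using assms(3) bdd_pathsE by metis
  then show "bdd_above ((\<lambda>i. case i of (m, s) \<Rightarrow> norm (Psi v m s)) ` ({..M} \<times> T))"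
    by (intro bdd_aboveI[of _ K]) auto
qed

lemma borel_measurable_path_modulus:
  fixes Psi :: "'v \<Rightarrow> nat \<Rightarrow> 'i::metric_space \<Rightarrow> 'a::euclidean_space"
  assumes "countable T" "\<forall>m\<le>M. \<forall>s\<in>T. (\<lambda>v. Psi v m s) \<in> borel_measurable Q"
    and "\<forall>v\<in>space Q. Psi v \<in> bdd_paths M T"
  shows "(\<lambda>v. path_modulus M T \<eta> (Psi v)) \<in> borel_measurable Q"
  unfolding path_modulus_def
proof (rule borel_measurable_cSUP)
  have "close_pairs M T \<eta> \<subseteq> {..M} \<times> T \<times> T"
    by (auto simp: close_pairs_def)
  then show "countable (close_pairs M T \<eta>)"
    by (rule countable_subset) (simp add: assms(1))
  fix i assume "i \<in> close_pairs M T \<eta>"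
  then obtain m s t where i: "i = (m, s, t)" and [measurable]: "(\<lambda>v. Psi v m s) \<in> borel_measurable Q"
      "(\<lambda>v. Psi v m t) \<in> borel_measurable Q"
    using assms(2) by (auto simp: close_pairs_def)
  show "(\<lambda>v. case i of (m, s, t) \<Rightarrow> norm (Psi v m s - Psi v m t)) \<in> borel_measurable Q"
    unfolding i by simp measurable
next
  fix v assume "v \<in> space Q"
  then obtain K where K: "\<And>m s. m \<le> M \<Longrightarrow> s \<in> T \<Longrightarrow> norm (Psi v m s) \<le> K"
    using assms(3) bdd_pathsE by metis
  show "bdd_above ((\<lambda>i. case i of (m, s, t) \<Rightarrow> norm (Psi v m s - Psi v m t)) ` close_pairs M T \<eta>)"
  proof (rule bdd_aboveI[of _ "2 * K"], clarsimp simp: close_pairs_def)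
    fix m s t assume "m \<le> M" "s \<in> T" "t \<in> T"
    then show "norm (Psi v m s - Psi v m t) \<le> 2 * K"
      using norm_triangle_ineq4[of "Psi v m s" "Psi v m t"] K[of m s] K[of m t] by linarith
  qed
qed

lemma path_modulus_tendsto_zero:
  assumes S: "compact S" "\<forall>m\<le>M. continuous_on S (F m)" and T: "T \<subseteq> S" "T \<noteq> {}"
    and F: "F \<in> bdd_paths M T" and \<eta>: "\<eta> \<longlonglongrightarrow> 0" "\<forall>j. \<eta> j > 0"
  shows "(\<lambda>j. path_modulus M T (\<eta> j) F) \<longlonglongrightarrow> 0"
proof (rule order_tendstoI)
  fix a :: real assume "a < 0"
  show "\<forall>\<^sub>F j in sequentially. a < path_modulus M T (\<eta> j) F"
  proof (intro always_eventually allI)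
    fix j
    show "a < path_modulus M T (\<eta> j) F"
      using path_modulus_nonneg[OF F T(2) \<eta>(2)[rule_format, of j]] \<open>a < 0\<close> by linarith
  qed
next
  fix e :: real assume "e > 0"
  have "\<forall>\<^sub>F j in sequentially. \<forall>s\<in>S. \<forall>t\<in>S. dist s t < \<eta> j \<longrightarrow> dist (F m s) (F m t) < e/2"
    if "m \<in> {..M}" for m
  proof -
    have "uniformly_continuous_on S (F m)"
      using S that by (intro compact_uniformly_continuous) auto
    then obtain d where "d > 0" and d: "\<forall>s\<in>S. \<forall>t\<in>S. dist t s < d \<longrightarrow> dist (F m t) (F m s) < e/2"
      using \<open>e > 0\<close> unfolding uniformly_continuous_on_def by (meson half_gt_zero)
    show ?thesis
      using order_tendstoD(2)[OF \<eta>(1) \<open>d > 0\<close>]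
    proof eventually_elim
      case (elim j)
      show ?case
      proof (intro ballI impI)
        fix s t assume "s \<in> S" "t \<in> S" "dist s t < \<eta> j"
        then show "dist (F m s) (F m t) < e/2"
          using d[rule_format, OF \<open>t \<in> S\<close> \<open>s \<in> S\<close>] elim by linarith
      qed
    qed
  qed
  then have "\<forall>\<^sub>F j in sequentially. \<forall>m\<in>{..M}. \<forall>s\<in>S. \<forall>t\<in>S. dist s t < \<eta> j \<longrightarrow> dist (F m s) (F m t) < e/2"
    by (intro eventually_ball_finite) auto
  then show "\<forall>\<^sub>F j in sequentially. path_modulus M T (\<eta> j) F < e"
  proof eventually_elim
    case (elim j)
    have "path_modulus M T (\<eta> j) F \<le> e/2"
    proof (rule path_modulus_least[OF T(2) \<eta>(2)[rule_format]])
      fix m s t assume "m \<le> M" "s \<in> T" "t \<in> T" "dist s t < \<eta> j"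
      moreover have "s \<in> S" "t \<in> S"
        using T(1) \<open>s \<in> T\<close> \<open>t \<in> T\<close> by auto
      ultimately have "dist (F m s) (F m t) < e/2"
        using elim by simp
      then show "norm (F m s - F m t) \<le> e/2"
        by (simp add: dist_norm)
    qed
    then show ?case
      using \<open>e > 0\<close> by linarith
  qed
qed

section \<open>Weak convergence to continuous limit paths\<close>

lemma clamp_lipschitz: "\<bar>min 1 (max 0 a) - min 1 (max 0 b)\<bar> \<le> \<bar>a - b\<bar>" for a b :: real
  by (auto simp: min_def max_def)

lemma
  fixes U :: "nat \<Rightarrow> 'v \<Rightarrow> real"
  assumes Q: "prob_space Q" and U: "\<And>j. U j \<in> borel_measurable Q"
    and lim: "\<forall>v\<in>space Q. (\<lambda>j. U j v) \<longlonglongrightarrow> 0"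
  shows integrable_clamp: "integrable Q (\<lambda>v. min 1 (max 0 (U j v)))"
    and integral_clamp_tendsto_zero: "(\<lambda>j. integral\<^sup>L Q (\<lambda>v. min 1 (max 0 (U j v)))) \<longlonglongrightarrow> 0"
proof -
  have int1: "integrable Q (\<lambda>_. 1::real)"
    using finite_measure.integrable_const[OF prob_space.finite_measure[OF Q]] .
  have lim0: "AE v in Q. (\<lambda>j. min 1 (max 0 (U j v))) \<longlonglongrightarrow> 0"
  proof (rule AE_I2)
    fix v assume "v \<in> space Q"
    with lim have Uv: "(\<lambda>j. U j v) \<longlonglongrightarrow> 0"
      by blast
    have "(\<lambda>j. min 1 (max 0 (U j v))) \<longlonglongrightarrow> min 1 (max 0 0)"
      by (intro tendsto_min tendsto_max tendsto_const Uv)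
    then show "(\<lambda>j. min 1 (max 0 (U j v))) \<longlonglongrightarrow> 0"
      by simp
  qed
  have bound: "AE v in Q. norm (min 1 (max 0 (U j v))) \<le> 1" for j
    by auto
  have meas: "(\<lambda>v. min 1 (max 0 (U j v))) \<in> borel_measurable Q" for j
    using U by measurable
  show "integrable Q (\<lambda>v. min 1 (max 0 (U j v)))"
    by (rule integrable_dominated_convergence2[where f="\<lambda>_. 0", OF _ meas int1 lim0 bound]) simp
  show "(\<lambda>j. integral\<^sup>L Q (\<lambda>v. min 1 (max 0 (U j v)))) \<longlonglongrightarrow> 0"
    using integral_dominated_convergence[where f="\<lambda>_. 0", OF _ meas int1 lim0 bound] by simp
qed

lemma bdd_cont_on_clamp:
  assumes L: "0 \<le> L" and \<epsilon>: "\<epsilon> > 0"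
    and dsym: "\<forall>F\<in>D. \<forall>G\<in>D. d F G = d G F" and lip: "\<forall>F\<in>D. \<forall>G\<in>D. \<Phi> F - \<Phi> G \<le> L * d F G"
  shows "bdd_cont_on D d (\<lambda>F. min 1 (max 0 (\<Phi> F / \<epsilon>)))"
  unfolding bdd_cont_on_def
proof (intro conjI ballI allI impI)
  show "\<exists>C. \<forall>F\<in>D. \<bar>min 1 (max 0 (\<Phi> F / \<epsilon>))\<bar> \<le> C"
    by (intro exI[of _ 1]) auto
next
  fix F and e :: real assume F: "F \<in> D" and "e > 0"
  show "\<exists>\<delta>>0. \<forall>G\<in>D. d F G < \<delta> \<longrightarrow> \<bar>min 1 (max 0 (\<Phi> F / \<epsilon>)) - min 1 (max 0 (\<Phi> G / \<epsilon>))\<bar> < e"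
  proof (intro exI[of _ "\<epsilon> * e / (L + 1)"] conjI ballI impI)
    show "0 < \<epsilon> * e / (L + 1)"
      using L \<epsilon> \<open>e > 0\<close> by simp
    fix G assume G: "G \<in> D" "d F G < \<epsilon> * e / (L + 1)"
    have "\<bar>\<Phi> F - \<Phi> G\<bar> \<le> L * d F G"
      using lip[rule_format, OF F G(1)] lip[rule_format, OF G(1) F] dsym[rule_format, OF F G(1)]
      by (simp add: abs_le_iff)
    have "\<bar>min 1 (max 0 (\<Phi> F / \<epsilon>)) - min 1 (max 0 (\<Phi> G / \<epsilon>))\<bar> \<le> \<bar>\<Phi> F / \<epsilon> - \<Phi> G / \<epsilon>\<bar>"
      by (rule clamp_lipschitz)
    also have "\<dots> = \<bar>\<Phi> F - \<Phi> G\<bar> / \<epsilon>"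
      using \<epsilon> by (simp add: diff_divide_distrib[symmetric])
    also have "\<dots> \<le> L * d F G / \<epsilon>"
      using \<open>\<bar>\<Phi> F - \<Phi> G\<bar> \<le> L * d F G\<close> \<epsilon> by (simp add: divide_right_mono)
    also have "\<dots> \<le> L * (\<epsilon> * e / (L + 1)) / \<epsilon>"
      using G(2) L \<epsilon> by (intro divide_right_mono mult_left_mono) auto
    also have "\<dots> = L / (L + 1) * e"
      using \<epsilon> by simp
    also have "\<dots> < e"
      using L \<open>e > 0\<close> mult_strict_right_mono[of "L / (L + 1)" 1 e] by simp
    finally show "\<bar>min 1 (max 0 (\<Phi> F / \<epsilon>)) - min 1 (max 0 (\<Phi> G / \<epsilon>))\<bar> < e" .
  qed
qed

text \<open>Portmanteau-type bound: the smoothed indicator \<open>min 1 (max 0 (\<Phi> / \<epsilon>))\<close> of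
  \<open>{\<epsilon> < \<Phi>}\<close> is bounded and continuous, so weak convergence controls its outer expectation.\<close>

lemma weak_conv_eventually_outer_prob_less:
  assumes P: "prob_space P" and wc: "weak_conv P Fn Q Psi D d"
    and dsym: "\<forall>F\<in>D. \<forall>G\<in>D. d F G = d G F" and L: "0 \<le> L"
    and lip: "\<forall>F\<in>D. \<forall>G\<in>D. \<Phi> F - \<Phi> G \<le> L * d F G" and \<epsilon>: "\<epsilon> > 0"
    and g: "g \<in> borel_measurable Q" "integrable Q g"
      "\<forall>v\<in>space Q. min 1 (max 0 (\<Phi> (Psi v) / \<epsilon>)) \<le> g v"
    and \<tau>: "integral\<^sup>L Q g < \<tau>"
  shows "\<forall>\<^sub>F n in sequentially. outer_prob P {\<omega> \<in> space P. \<epsilon> < \<Phi> (Fn n \<omega>)} < \<tau>"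
proof -
  define h where "h F = min 1 (max 0 (\<Phi> F / \<epsilon>))" for F
  have "bdd_cont_on D d h"
    unfolding h_def using L \<epsilon> dsym lip by (rule bdd_cont_on_clamp)
  then have conv: "(\<lambda>n. outer_exp P (\<lambda>\<omega>. h (Fn n \<omega>))) \<longlonglongrightarrow> outer_exp Q (\<lambda>v. h (Psi v))"
    using wc unfolding weak_conv_def by blast
  have "outer_exp Q (\<lambda>v. h (Psi v)) \<le> integral\<^sup>L Q g"
    using g unfolding h_def by (intro outer_exp_le_integral) auto
  with \<tau> have "outer_exp Q (\<lambda>v. h (Psi v)) < \<tau>"
    by linarith
  from order_tendstoD(2)[OF conv this]
  show ?thesis
  proof eventually_elim
    case (elim n)
    have "outer_prob P {\<omega> \<in> space P. \<epsilon> < \<Phi> (Fn n \<omega>)} \<le> outer_exp P (\<lambda>\<omega>. h (Fn n \<omega>))"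
    proof (rule outer_prob_le_outer_exp[OF P])
      show "\<forall>\<omega>\<in>space P. 0 \<le> h (Fn n \<omega>) \<and> h (Fn n \<omega>) \<le> 1"
        by (simp add: h_def)
      show "{\<omega> \<in> space P. \<epsilon> < \<Phi> (Fn n \<omega>)} \<subseteq> {\<omega> \<in> space P. 1 \<le> h (Fn n \<omega>)}"
        using \<epsilon> by (auto simp: h_def)
    qed
    with elim show ?case
      by linarith
  qed
qed

lemma weak_conv_functional_eventually_small:
  fixes \<Phi> :: "nat \<Rightarrow> 'f \<Rightarrow> real"
  assumes P: "prob_space P" and Q: "prob_space Q" and wc: "weak_conv P Fn Q Psi D d"
    and dsym: "\<forall>F\<in>D. \<forall>G\<in>D. d F G = d G F" and L: "0 \<le> L"
    and lip: "\<And>j. \<forall>F\<in>D. \<forall>G\<in>D. \<Phi> j F - \<Phi> j G \<le> L * d F G"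
    and U: "\<And>j. U j \<in> borel_measurable Q" "\<And>j. \<forall>v\<in>space Q. \<Phi> j (Psi v) \<le> U j v"
      "\<forall>v\<in>space Q. (\<lambda>j. U j v) \<longlonglongrightarrow> 0"
    and \<epsilon>: "\<epsilon> > 0" and \<tau>: "\<tau> > 0"
  obtains j where "\<forall>\<^sub>F n in sequentially. outer_prob P {\<omega> \<in> space P. \<epsilon> < \<Phi> j (Fn n \<omega>)} < \<tau>"
proof -
  define g where "g j v = min 1 (max 0 (U j v / \<epsilon>))" for j v
  have g_meas: "g j \<in> borel_measurable Q" for j
    unfolding g_def using U(1) by measurable
  have lim: "\<forall>v\<in>space Q. (\<lambda>j. U j v / \<epsilon>) \<longlonglongrightarrow> 0"
    using U(3) tendsto_divide_zero by blast
  have "(\<lambda>j. integral\<^sup>L Q (g j)) \<longlonglongrightarrow> 0"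
    unfolding g_def using Q U(1) lim by (intro integral_clamp_tendsto_zero) auto
  from order_tendstoD(2)[OF this \<tau>] obtain j where j: "integral\<^sup>L Q (g j) < \<tau>"
    unfolding eventually_sequentially by blast
  have "\<forall>v\<in>space Q. min 1 (max 0 (\<Phi> j (Psi v) / \<epsilon>)) \<le> g j v"
  proof
    fix v assume "v \<in> space Q"
    then have "\<Phi> j (Psi v) / \<epsilon> \<le> U j v / \<epsilon>"
      using U(2) \<epsilon> by (simp add: divide_right_mono)
    then show "min 1 (max 0 (\<Phi> j (Psi v) / \<epsilon>)) \<le> g j v"
      unfolding g_def by (intro min.mono max.mono) auto
  qed
  moreover have "integrable Q (g j)"
    unfolding g_def using Q U(1) lim by (intro integrable_clamp) auto
  ultimately have "\<forall>\<^sub>F n in sequentially. outer_prob P {\<omega> \<in> space P. \<epsilon> < \<Phi> j (Fn n \<omega>)} < \<tau>"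
    using g_meas j by (intro weak_conv_eventually_outer_prob_less[OF P wc dsym L lip \<epsilon>, where g="g j"])
  then show ?thesis
    using that by blast
qed

locale weak_conv_cont_paths =
  fixes P :: "'w measure" and Q :: "'v measure"
    and Fn :: "nat \<Rightarrow> 'w \<Rightarrow> nat \<Rightarrow> 'i::{metric_space, second_countable_topology} \<Rightarrow> 'a::euclidean_space"
    and Psi :: "'v \<Rightarrow> nat \<Rightarrow> 'i \<Rightarrow> 'a" and M :: nat and S :: "'i set"
  assumes P: "prob_space P" and Q: "prob_space Q"
    and wc: "weak_conv P Fn Q Psi (bdd_paths M S) (sup_dist M S)"
    and S_nonempty: "S \<noteq> {}" and S_compact: "compact S"
    and Psi_cont: "\<forall>m\<le>M. \<forall>v\<in>space Q. continuous_on S (Psi v m)"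
    and Psi_meas: "\<forall>m\<le>M. \<forall>s\<in>S. (\<lambda>v. Psi v m s) \<in> borel_measurable Q"
begin

lemma Fn_bdd_paths: "\<omega> \<in> space P \<Longrightarrow> Fn n \<omega> \<in> bdd_paths M S"
  and Psi_bdd_paths: "v \<in> space Q \<Longrightarrow> Psi v \<in> bdd_paths M S"
  using wc unfolding weak_conv_def by auto

lemma sup_dist_symmetric: "\<forall>F\<in>bdd_paths M S. \<forall>G\<in>bdd_paths M S. sup_dist M S F G = sup_dist M S G F"
  by (simp add: sup_dist_commute)

text \<open>The outer expectation in \<open>weak_conv\<close> needs a measurable majorant of a functional of
  the limit paths; by continuity, the same functional over a countable dense subset is one.\<close>

lemma countable_dense_subset:
  obtains T where "countable T" "T \<subseteq> S" "T \<noteq> {}" "\<forall>s\<in>S. \<forall>e>0. \<exists>s'\<in>T. dist s' s < e"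
proof -
  obtain T where T: "countable T" "T \<subseteq> S" "S \<subseteq> closure T"
    using separable by blast
  have "\<forall>s\<in>S. \<forall>e>0. \<exists>s'\<in>T. dist s' s < e"
  proof
    fix s assume "s \<in> S"
    then have "s \<in> closure T"
      using T(3) by blast
    then show "\<forall>e>0. \<exists>s'\<in>T. dist s' s < e"
      by (simp add: closure_approachable)
  qed
  moreover have "T \<noteq> {}"
    using S_nonempty T(3) by auto
  ultimately show ?thesis
    using that T(1,2) by blast
qed

lemma path_sup_tight:
  assumes "\<tau> > 0"
  obtains c where "\<forall>\<^sub>F n in sequentially. outer_prob P {\<omega> \<in> space P. c < path_sup M S (Fn n \<omega>)} < \<tau>"
proof -
  obtain T where T: "countable T" "T \<subseteq> S" "T \<noteq> {}" "\<forall>s\<in>S. \<forall>e>0. \<exists>s'\<in>T. dist s' s < e"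
    by (rule countable_dense_subset)
  define \<Phi> where "\<Phi> j F = max 0 (path_sup M S F - real j)" for j and F :: "nat \<Rightarrow> 'i \<Rightarrow> 'a"
  define U where "U j v = max 0 (path_sup M T (Psi v) - real j)" for j v
  have Psi_T: "\<forall>v\<in>space Q. Psi v \<in> bdd_paths M T"
    using bdd_paths_subset[OF Psi_bdd_paths T(2)] by blast
  have lip: "\<forall>F\<in>bdd_paths M S. \<forall>G\<in>bdd_paths M S. \<Phi> j F - \<Phi> j G \<le> 1 * sup_dist M S F G" for j
  proof (intro ballI)
    fix F G :: "nat \<Rightarrow> 'i \<Rightarrow> 'a" assume FG: "F \<in> bdd_paths M S" "G \<in> bdd_paths M S"
    have "path_sup M S F - path_sup M S G \<le> sup_dist M S F G" "0 \<le> sup_dist M S F G"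
      using path_sup_lipschitz[OF FG S_nonempty] sup_dist_nonneg[OF FG S_nonempty] .
    then show "\<Phi> j F - \<Phi> j G \<le> 1 * sup_dist M S F G"
      unfolding \<Phi>_def by (auto simp: max_def)
  qed
  have "(\<lambda>v. path_sup M T (Psi v)) \<in> borel_measurable Q"
    using T(1,2) Psi_meas Psi_T by (intro borel_measurable_path_sup) auto
  then have U_meas: "U j \<in> borel_measurable Q" for j
    unfolding U_def by measurable
  have U_dom: "\<forall>v\<in>space Q. \<Phi> j (Psi v) \<le> U j v" for j
  proof
    fix v assume v: "v \<in> space Q"
    then have "path_sup M S (Psi v) \<le> path_sup M T (Psi v)"
      using Psi_cont by (intro path_sup_le_dense[OF Psi_bdd_paths[OF v] _ T(2-4)]) auto
    then show "\<Phi> j (Psi v) \<le> U j v"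
      unfolding \<Phi>_def U_def by (intro max.mono) auto
  qed
  have U_lim: "\<forall>v\<in>space Q. (\<lambda>j. U j v) \<longlonglongrightarrow> 0"
  proof
    fix v
    have "\<forall>\<^sub>F j in sequentially. U j v = 0"
      using eventually_ge_at_top[of "nat \<lceil>path_sup M T (Psi v)\<rceil>"]
      by eventually_elim (auto simp: U_def)
    then show "(\<lambda>j. U j v) \<longlonglongrightarrow> 0"
      by (rule tendsto_eventually)
  qed
  obtain j where j: "\<forall>\<^sub>F n in sequentially. outer_prob P {\<omega> \<in> space P. 1 < \<Phi> j (Fn n \<omega>)} < \<tau>"
  proof (rule weak_conv_functional_eventually_small[OF P Q wc, where L=1 and \<Phi>=\<Phi> and U=U and \<epsilon>=1 and \<tau>=\<tau>])
    show "\<forall>F\<in>bdd_paths M S. \<forall>G\<in>bdd_paths M S. sup_dist M S F G = sup_dist M S G F"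
      by (rule sup_dist_symmetric)
    show "\<forall>F\<in>bdd_paths M S. \<forall>G\<in>bdd_paths M S. \<Phi> j F - \<Phi> j G \<le> 1 * sup_dist M S F G" for j
      by (rule lip)
    show "U j \<in> borel_measurable Q" for j
      by (rule U_meas)
    show "\<forall>v\<in>space Q. \<Phi> j (Psi v) \<le> U j v" for j
      by (rule U_dom)
    show "\<forall>v\<in>space Q. (\<lambda>j. U j v) \<longlonglongrightarrow> 0"
      by (rule U_lim)
  qed (use assms that in simp_all)
  have eq: "{\<omega> \<in> space P. real j + 1 < path_sup M S (Fn n \<omega>)} = {\<omega> \<in> space P. 1 < \<Phi> j (Fn n \<omega>)}"
    for n by (auto simp: \<Phi>_def)
  show ?thesis
    using j by (intro that[of "real j + 1"]) (simp only: eq)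
qed

lemma path_modulus_small:
  assumes "\<epsilon> > 0" "\<tau> > 0"
  obtains \<eta> where "\<eta> > 0"
    "\<forall>\<^sub>F n in sequentially. outer_prob P {\<omega> \<in> space P. \<epsilon> < path_modulus M S \<eta> (Fn n \<omega>)} < \<tau>"
proof -
  obtain T where T: "countable T" "T \<subseteq> S" "T \<noteq> {}" "\<forall>s\<in>S. \<forall>e>0. \<exists>s'\<in>T. dist s' s < e"
    by (rule countable_dense_subset)
  define \<eta> where "\<eta> j = inverse (real (Suc j))" for j
  have \<eta>: "\<forall>j. \<eta> j > 0" "\<eta> \<longlonglongrightarrow> 0"
    unfolding \<eta>_def using LIMSEQ_inverse_real_of_nat by auto
  define \<Phi> where "\<Phi> j F = path_modulus M S (\<eta> j) F" for j and F :: "nat \<Rightarrow> 'i \<Rightarrow> 'a"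
  define U where "U j v = path_modulus M T (\<eta> j) (Psi v)" for j v
  have lip: "\<forall>F\<in>bdd_paths M S. \<forall>G\<in>bdd_paths M S. \<Phi> j F - \<Phi> j G \<le> 2 * sup_dist M S F G" for j
    unfolding \<Phi>_def using path_modulus_lipschitz S_nonempty \<eta>(1) by blast
  have Psi_T: "\<forall>v\<in>space Q. Psi v \<in> bdd_paths M T"
    using bdd_paths_subset[OF Psi_bdd_paths T(2)] by blast
  have U_meas: "U j \<in> borel_measurable Q" for j
    unfolding U_def using T(1,2) Psi_meas Psi_T by (intro borel_measurable_path_modulus) auto
  have U_dom: "\<forall>v\<in>space Q. \<Phi> j (Psi v) \<le> U j v" for j
  proof
    fix v assume v: "v \<in> space Q"
    then show "\<Phi> j (Psi v) \<le> U j v"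
      unfolding \<Phi>_def U_def using Psi_cont \<eta>(1)
      by (intro path_modulus_le_dense[OF Psi_bdd_paths[OF v] _ T(2-4)]) auto
  qed
  have U_lim: "\<forall>v\<in>space Q. (\<lambda>j. U j v) \<longlonglongrightarrow> 0"
  proof
    fix v assume v: "v \<in> space Q"
    then show "(\<lambda>j. U j v) \<longlonglongrightarrow> 0"
      unfolding U_def using Psi_cont Psi_T
      by (intro path_modulus_tendsto_zero[OF S_compact _ T(2,3) _ \<eta>(2,1)]) auto
  qed
  obtain j where "\<forall>\<^sub>F n in sequentially. outer_prob P {\<omega> \<in> space P. \<epsilon> < \<Phi> j (Fn n \<omega>)} < \<tau>"
  proof (rule weak_conv_functional_eventually_small[OF P Q wc, where L=2 and \<Phi>=\<Phi> and U=U and \<epsilon>=\<epsilon> and \<tau>=\<tau>])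
    show "\<forall>F\<in>bdd_paths M S. \<forall>G\<in>bdd_paths M S. sup_dist M S F G = sup_dist M S G F"
      by (rule sup_dist_symmetric)
    show "\<forall>F\<in>bdd_paths M S. \<forall>G\<in>bdd_paths M S. \<Phi> j F - \<Phi> j G \<le> 2 * sup_dist M S F G" for j
      by (rule lip)
    show "U j \<in> borel_measurable Q" for j
      by (rule U_meas)
    show "\<forall>v\<in>space Q. \<Phi> j (Psi v) \<le> U j v" for j
      by (rule U_dom)
    show "\<forall>v\<in>space Q. (\<lambda>j. U j v) \<longlonglongrightarrow> 0"
      by (rule U_lim)
  qed (use assms that in simp_all)
  then show ?thesis
    using that \<eta>(1) unfolding \<Phi>_def by blast
qed

lemma small_op_path_increment:
  assumes m: "m \<le> M" and dist: "small_op P (\<lambda>n \<omega>. dist (s n \<omega>) (t n \<omega>)) (\<lambda>_ _. 1)"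
    and G: "(\<lambda>n. outer_prob P (G n)) \<longlonglongrightarrow> 0"
    and inS: "\<And>n \<omega>. \<omega> \<in> space P - G n \<Longrightarrow> s n \<omega> \<in> S \<and> t n \<omega> \<in> S"
  shows "small_op P (\<lambda>n \<omega>. Fn n \<omega> m (s n \<omega>) - Fn n \<omega> m (t n \<omega>)) (\<lambda>_ _. 1)"
  unfolding small_op_def
proof (intro allI impI)
  fix \<epsilon> :: real assume "\<epsilon> > 0"
  show "(\<lambda>n. outer_prob P {\<omega> \<in> space P. norm (Fn n \<omega> m (s n \<omega>) - Fn n \<omega> m (t n \<omega>)) > \<epsilon> * 1}) \<longlonglongrightarrow> 0"
    unfolding outer_prob_tendsto_zero_iff
  proof (intro allI impI)
    fix \<tau> :: real assume "\<tau> > 0"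
    then obtain \<eta> where "\<eta> > 0" and modulus:
        "\<forall>\<^sub>F n in sequentially. outer_prob P {\<omega> \<in> space P. \<epsilon> < path_modulus M S \<eta> (Fn n \<omega>)} < \<tau>/2"
      using path_modulus_small[OF \<open>\<epsilon> > 0\<close>, of "\<tau>/2"] by auto
    define E where "E n = G n \<union> {\<omega> \<in> space P. norm (dist (s n \<omega>) (t n \<omega>)) > \<eta>/2 * 1}" for n
    have "(\<lambda>n. outer_prob P (E n)) \<longlonglongrightarrow> 0"
      unfolding E_def using dist half_gt_zero[OF \<open>\<eta> > 0\<close>] unfolding small_op_def
      by (intro outer_prob_tendsto_zero_Un G) blast
    then have "\<forall>\<^sub>F n in sequentially. outer_prob P (E n) < \<tau>/2"
      using half_gt_zero[OF \<open>\<tau> > 0\<close>] unfolding outer_prob_tendsto_zero_iff by blast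
    with modulus show "\<forall>\<^sub>F n in sequentially.
        outer_prob P {\<omega> \<in> space P. norm (Fn n \<omega> m (s n \<omega>) - Fn n \<omega> m (t n \<omega>)) > \<epsilon> * 1} < \<tau>"
    proof eventually_elim
      case (elim n)
      let ?Mod = "{\<omega> \<in> space P. \<epsilon> < path_modulus M S \<eta> (Fn n \<omega>)}"
      have "{\<omega> \<in> space P. norm (Fn n \<omega> m (s n \<omega>) - Fn n \<omega> m (t n \<omega>)) > \<epsilon> * 1} \<subseteq> E n \<union> ?Mod"
      proof
        fix \<omega> assume \<omega>: "\<omega> \<in> {\<omega> \<in> space P. norm (Fn n \<omega> m (s n \<omega>) - Fn n \<omega> m (t n \<omega>)) > \<epsilon> * 1}"
        show "\<omega> \<in> E n \<union> ?Mod"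
        proof (rule ccontr)
          assume "\<omega> \<notin> E n \<union> ?Mod"
          then have "\<omega> \<in> space P - G n" "dist (s n \<omega>) (t n \<omega>) < \<eta>" "path_modulus M S \<eta> (Fn n \<omega>) \<le> \<epsilon>"
            using \<omega> \<open>\<eta> > 0\<close> unfolding E_def by auto
          then have "norm (Fn n \<omega> m (s n \<omega>) - Fn n \<omega> m (t n \<omega>)) \<le> \<epsilon>"
            using path_modulus_upper[OF Fn_bdd_paths m] inS by (meson DiffD1 order_trans)
          then show False
            using \<omega> by simp
        qed
      qed
      then have "outer_prob P {\<omega> \<in> space P. norm (Fn n \<omega> m (s n \<omega>) - Fn n \<omega> m (t n \<omega>)) > \<epsilon> * 1}
          \<le> outer_prob P (E n) + outer_prob P ?Mod"
        using outer_prob_mono outer_prob_Un_le order_trans by blast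
      then show ?case
        using elim by linarith
    qed
  qed
qed

end

lemma mean0_cont_gaussian_process_measurable:
  fixes Z :: "'i::topological_space \<Rightarrow> 'v \<Rightarrow> real^'p"
  assumes "mean0_cont_gaussian_process Q S Z" "s \<in> S"
  shows "Z s \<in> borel_measurable Q"
proof (subst borel_measurable_euclidean_space, intro ballI)
  fix i :: "real^'p" assume "i \<in> Basis"
  have "\<forall>S' c. finite S' \<and> S' \<subseteq> S \<longrightarrow> gaussian_rv Q (\<lambda>v. \<Sum>s\<in>S'. c s \<bullet> Z s v)"
    using assms(1) unfolding mean0_cont_gaussian_process_def by (rule conjunct1)
  from this[rule_format, of "{s}" "\<lambda>_. i"] have "gaussian_rv Q (\<lambda>v. \<Sum>s'\<in>{s}. i \<bullet> Z s' v)"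
    using assms(2) by simp
  then show "(\<lambda>v. Z s v \<bullet> i) \<in> borel_measurable Q"
    unfolding gaussian_rv_def by (simp add: inner_commute)
qed

lemma mean0_cont_gaussian_process_continuous:
  assumes "mean0_cont_gaussian_process Q S Z" "v \<in> space Q"
  shows "continuous_on S (\<lambda>s. Z s v)"
proof -
  have "\<forall>v\<in>space Q. continuous_on S (\<lambda>s. Z s v)"
    using assms(1) unfolding mean0_cont_gaussian_process_def by (elim conjE)
  then show ?thesis
    using assms(2) by (rule bspec)
qed

lemma weak_conv_cont_paths_gaussian:
  fixes psi :: "nat \<Rightarrow> 'i::{metric_space, second_countable_topology} \<Rightarrow> 'v \<Rightarrow> real^'p"
  assumes "prob_space P" "prob_space Q" "weak_conv P Fn Q (\<lambda>v m s. psi m s v) (bdd_paths M S) (sup_dist M S)"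
    and "S \<noteq> {}" "compact S" and gaussian: "\<forall>m\<le>M. mean0_cont_gaussian_process Q S (psi m)"
  shows "weak_conv_cont_paths P Q Fn (\<lambda>v m s. psi m s v) M S"
proof (rule weak_conv_cont_paths.intro[OF assms(1-5)])
  show "\<forall>m\<le>M. \<forall>v\<in>space Q. continuous_on S (\<lambda>s. psi m s v)"
  proof (intro allI impI ballI)
    fix m v assume "m \<le> M" "v \<in> space Q"
    then show "continuous_on S (\<lambda>s. psi m s v)"
      using mean0_cont_gaussian_process_continuous[of Q S "psi m" v] gaussian by simp
  qed
  show "\<forall>m\<le>M. \<forall>s\<in>S. (\<lambda>v. psi m s v) \<in> borel_measurable Q"
  proof (intro allI impI ballI)
    fix m s assume "m \<le> M" "s \<in> S"
    then show "(\<lambda>v. psi m s v) \<in> borel_measurable Q"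
      using mean0_cont_gaussian_process_measurable[of Q S "psi m" s] gaussian by simp
  qed
qed

section \<open>The jackknifed simulation estimator\<close>

lemma diff_k_Suc_has_jacobian:
  fixes f :: "real^'m \<Rightarrow> real^'n"
  assumes "diff_k (Suc k) U f" "x \<in> U"
  shows "(f has_derivative (\<lambda>h. jacobian f (at x) *v h)) (at x)"
  using assms by (simp add: jacobian_works[symmetric])

lemma power_mult_unit_interval: "0 \<le> dl \<Longrightarrow> dl \<le> 1 \<Longrightarrow> l \<in> {0..1} \<Longrightarrow> dl ^ r * l \<in> {0..1::real}"
  by (auto intro: mult_le_one power_le_one)

lemma norm_weighted_average_le:
  fixes X :: "nat \<Rightarrow> nat \<Rightarrow> 'a::real_normed_vector"
  assumes "M \<ge> 1" "\<And>r m. r \<le> k \<Longrightarrow> m \<in> {1..M} \<Longrightarrow> norm (X r m) \<le> U"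
  shows "norm (\<Sum>r\<le>k. gam r *\<^sub>R ((1 / real M) *\<^sub>R (\<Sum>m\<in>{1..M}. X r m))) \<le> (\<Sum>r\<le>k. \<bar>gam r\<bar>) * U"
proof -
  have avg: "norm ((1 / real M) *\<^sub>R (\<Sum>m\<in>{1..M}. X r m)) \<le> U" if "r \<le> k" for r
  proof -
    have "norm (\<Sum>m\<in>{1..M}. X r m) \<le> real M * U"
      using sum_norm_le[of "{1..M}" "X r" "\<lambda>_. U"] assms(2)[OF that] by simp
    then show ?thesis
      using assms(1) by (simp add: divide_le_eq mult.commute)
  qed
  have "norm (\<Sum>r\<le>k. gam r *\<^sub>R ((1 / real M) *\<^sub>R (\<Sum>m\<in>{1..M}. X r m)))
      \<le> (\<Sum>r\<le>k. \<bar>gam r\<bar> * norm ((1 / real M) *\<^sub>R (\<Sum>m\<in>{1..M}. X r m)))"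
    by (rule order_trans[OF norm_sum]) simp
  also have "\<dots> \<le> (\<Sum>r\<le>k. \<bar>gam r\<bar> * U)"
    using avg by (intro sum_mono mult_left_mono) auto
  finally show ?thesis
    by (simp add: sum_distrib_right)
qed

lemma scaled_thetabar_k_error:
  assumes "M \<ge> 1"
  shows "s *\<^sub>R (thetabar_k M thetahat k gam dl n b l \<omega> - theta_k theta k gam dl b l)
    = (\<Sum>r\<le>k. gam r *\<^sub>R ((1 / real M) *\<^sub>R
        (\<Sum>m\<in>{1..M}. s *\<^sub>R (thetahat m n b (dl ^ r * l) \<omega> - theta b (dl ^ r * l)))))"
proof -
  have "thetabar M thetahat n b c \<omega> - theta b c = (1 / real M) *\<^sub>R (\<Sum>m\<in>{1..M}. thetahat m n b c \<omega> - theta b c)"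
    for c
    using assms
    by (simp add: thetabar_def sum_subtractf sum_constant_scaleR scaleR_diff_right del: sum_constant)
  then have "thetabar_k M thetahat k gam dl n b l \<omega> - theta_k theta k gam dl b l
    = (\<Sum>r\<le>k. gam r *\<^sub>R ((1 / real M) *\<^sub>R
        (\<Sum>m\<in>{1..M}. thetahat m n b (dl ^ r * l) \<omega> - theta b (dl ^ r * l))))"
    unfolding thetabar_k_def theta_k_def by (simp add: sum_subtractf[symmetric] scaleR_diff_right[symmetric])
  then show ?thesis
    by (simp add: scaleR_sum_right scaleR_diff_right mult.commute)
qed

lemma scaled_thetabar_k_error_diff:
  assumes "M \<ge> 1"
  shows "s *\<^sub>R (thetabar_k M thetahat k gam dl n b1 l \<omega> - theta_k theta k gam dl b1 l)
       - s *\<^sub>R (thetabar_k M thetahat k gam dl n b0 l \<omega> - theta_k theta k gam dl b0 l)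
    = (\<Sum>r\<le>k. gam r *\<^sub>R ((1 / real M) *\<^sub>R (\<Sum>m\<in>{1..M}.
        s *\<^sub>R (thetahat m n b1 (dl ^ r * l) \<omega> - theta b1 (dl ^ r * l))
        - s *\<^sub>R (thetahat m n b0 (dl ^ r * l) \<omega> - theta b0 (dl ^ r * l)))))"
  unfolding scaled_thetabar_k_error[OF assms] by (simp only: sum_subtractf scaleR_diff_right)

lemma op_unif_thetabar_k:
  assumes paths: "weak_conv_cont_paths P Q Fn Psi M (B \<times> {0..1})"
    and Fn: "\<And>n \<omega> m b l. m \<in> {1..M} \<Longrightarrow> Fn n \<omega> m (b, l) = sqrt (real n) *\<^sub>R (thetahat m n b l \<omega> - theta b l)"
    and M: "M \<ge> 1" and dl: "0 \<le> dl" "dl \<le> 1" and lam: "\<forall>n. \<forall>\<omega>\<in>space P. lam n \<omega> \<in> {0..1}"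
  shows "op_unif P B (\<lambda>n b \<omega>. thetabar_k M thetahat k gam dl n b (lam n \<omega>) \<omega>
                               - theta_k theta k gam dl b (lam n \<omega>))"
proof -
  interpret weak_conv_cont_paths P Q Fn Psi M "B \<times> {0..1}"
    by (rule paths)
  let ?Z = "\<lambda>n \<omega>. path_sup M (B \<times> {0..1}) (Fn n \<omega>)"
  show ?thesis
  proof (rule op_unif_of_tight_bound[where Z="?Z" and K="(\<Sum>r\<le>k. \<bar>gam r\<bar>) + 1"])
    show "\<exists>c. \<forall>\<^sub>F n in sequentially. outer_prob P {\<omega> \<in> space P. c < ?Z n \<omega>} < \<tau>" if "\<tau> > 0" for \<tau>
      using path_sup_tight[OF that] by blast
    show "0 < (\<Sum>r\<le>k. \<bar>gam r\<bar>) + 1"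
      by (simp add: add_nonneg_pos sum_nonneg)
  next
    fix n :: nat and b \<omega> assume n: "n \<ge> 1" and \<omega>: "\<omega> \<in> space P" and b: "b \<in> B"
    have in_S: "(b, dl ^ r * lam n \<omega>) \<in> B \<times> {0..1}" for r
      using b dl lam \<omega> power_mult_unit_interval by blast
    have term_bound: "norm (thetahat m n b (dl ^ r * lam n \<omega>) \<omega> - theta b (dl ^ r * lam n \<omega>))
        \<le> ?Z n \<omega> / sqrt (real n)" if "m \<in> {1..M}" for r m
    proof -
      have "norm (Fn n \<omega> m (b, dl ^ r * lam n \<omega>)) \<le> ?Z n \<omega>"
        using that in_S by (intro path_sup_upper[OF Fn_bdd_paths[OF \<omega>]]) auto
      then show ?thesis
        using n by (simp add: Fn[OF that] le_divide_eq mult.commute)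
    qed
    have "thetabar_k M thetahat k gam dl n b (lam n \<omega>) \<omega> - theta_k theta k gam dl b (lam n \<omega>)
        = (\<Sum>r\<le>k. gam r *\<^sub>R ((1 / real M) *\<^sub>R
            (\<Sum>m\<in>{1..M}. thetahat m n b (dl ^ r * lam n \<omega>) \<omega> - theta b (dl ^ r * lam n \<omega>))))"
      using scaled_thetabar_k_error[OF M, where s=1] by (simp only: scaleR_one)
    then have "norm (thetabar_k M thetahat k gam dl n b (lam n \<omega>) \<omega> - theta_k theta k gam dl b (lam n \<omega>))
        \<le> (\<Sum>r\<le>k. \<bar>gam r\<bar>) * (?Z n \<omega> / sqrt (real n))"
      using term_bound by (simp only:) (rule norm_weighted_average_le[OF M])
    also have "\<dots> \<le> ((\<Sum>r\<le>k. \<bar>gam r\<bar>) + 1) * ?Z n \<omega> / sqrt (real n)"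
    proof -
      have "norm (Fn n \<omega> 0 (b, 0)) \<le> ?Z n \<omega>"
        using b by (intro path_sup_upper[OF Fn_bdd_paths[OF \<omega>]]) auto
      then have "0 \<le> ?Z n \<omega>"
        by (rule order_trans[OF norm_ge_zero])
      then show ?thesis
        by (simp add: divide_right_mono mult_right_mono)
    qed
    finally show "norm (thetabar_k M thetahat k gam dl n b (lam n \<omega>) \<omega> - theta_k theta k gam dl b (lam n \<omega>))
        \<le> ((\<Sum>r\<le>k. \<bar>gam r\<bar>) + 1) * ?Z n \<omega> / sqrt (real n)" .
  qed
qed

lemma small_op_thetabar_k_error_increment:
  assumes paths: "weak_conv_cont_paths P Q Fn Psi M (B \<times> {0..1})"
    and Fn: "\<And>n \<omega> m b l. m \<in> {1..M} \<Longrightarrow> Fn n \<omega> m (b, l) = sqrt (real n) *\<^sub>R (thetahat m n b l \<omega> - theta b l)"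
    and M: "M \<ge> 1" and dl: "0 \<le> dl" "dl \<le> 1" and lam: "\<forall>n. \<forall>\<omega>\<in>space P. lam n \<omega> \<in> {0..1}"
    and b: "small_op P (\<lambda>n \<omega>. b n \<omega> - beta0) (\<lambda>_ _. 1)" "beta0 \<in> B"
    and G: "(\<lambda>n. outer_prob P (G n)) \<longlonglongrightarrow> 0" "\<And>n \<omega>. \<omega> \<in> space P - G n \<Longrightarrow> b n \<omega> \<in> B"
  shows "small_op P (\<lambda>n \<omega>.
      sqrt (real n) *\<^sub>R (thetabar_k M thetahat k gam dl n (b n \<omega>) (lam n \<omega>) \<omega> - theta_k theta k gam dl (b n \<omega>) (lam n \<omega>))
      - sqrt (real n) *\<^sub>R (thetabar_k M thetahat k gam dl n beta0 (lam n \<omega>) \<omega> - theta_k theta k gam dl beta0 (lam n \<omega>)))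
      (\<lambda>_ _. 1)"
proof -
  interpret weak_conv_cont_paths P Q Fn Psi M "B \<times> {0..1}"
    by (rule paths)
  have increment: "small_op P (\<lambda>n \<omega>. Fn n \<omega> m (b n \<omega>, dl ^ r * lam n \<omega>) - Fn n \<omega> m (beta0, dl ^ r * lam n \<omega>))
      (\<lambda>_ _. 1)" if "m \<in> {1..M}" for r m
  proof (rule small_op_path_increment[OF _ _ G(1)])
    show "m \<le> M"
      using that by simp
    show "small_op P (\<lambda>n \<omega>. dist (b n \<omega>, dl ^ r * lam n \<omega>) (beta0, dl ^ r * lam n \<omega>)) (\<lambda>_ _. 1)"
      by (rule small_op_eventually_le[OF b(1), where G="\<lambda>_. {}"]) (simp_all add: outer_prob_empty dist_norm)
    fix n \<omega> assume "\<omega> \<in> space P - G n"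
    then show "(b n \<omega>, dl ^ r * lam n \<omega>) \<in> B \<times> {0..1} \<and> (beta0, dl ^ r * lam n \<omega>) \<in> B \<times> {0..1}"
      using G(2) b(2) lam dl power_mult_unit_interval by blast
  qed
  have "small_op P (\<lambda>n \<omega>. \<Sum>r\<le>k. gam r *\<^sub>R ((1 / real M) *\<^sub>R (\<Sum>m\<in>{1..M}.
      Fn n \<omega> m (b n \<omega>, dl ^ r * lam n \<omega>) - Fn n \<omega> m (beta0, dl ^ r * lam n \<omega>)))) (\<lambda>_ _. 1)"
    by (intro small_op_sum small_op_scaleR ballI allI increment) auto
  then show ?thesis
    by (rule small_op_cong_eventually) (simp add: scaled_thetabar_k_error_diff[OF M] Fn)
qed

lemma small_op_thetabar_k_increment:
  assumes paths: "weak_conv_cont_paths P Q Fn Psi M (B \<times> {0..1})"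
    and Fn: "\<And>n \<omega> m b l. m \<in> {1..M} \<Longrightarrow> Fn n \<omega> m (b, l) = sqrt (real n) *\<^sub>R (thetahat m n b l \<omega> - theta b l)"
    and M: "M \<ge> 1" and dl: "0 \<le> dl" "dl \<le> 1"
    and lam: "\<forall>n. \<forall>\<omega>\<in>space P. lam n \<omega> \<in> {0..1}" "small_op P lam (\<lambda>_ _. 1)"
      "small_op P (\<lambda>n \<omega>. sqrt (real n) * lam n \<omega> ^ (k + 1)) (\<lambda>_ _. 1)"
    and bias: "\<epsilon>0 > 0" "\<forall>b\<in>B. \<forall>l\<in>{0..\<epsilon>0}. norm (theta_k theta k gam dl b l - theta b 0) \<le> C * l ^ (k + 1)"
    and beta0: "beta0 \<in> interior B" and deriv: "((\<lambda>b. theta b 0) has_derivative f') (at beta0)"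
    and delta: "small_op P deltan (\<lambda>n _. sqrt (real n))"
  shows "small_op P (\<lambda>n \<omega>.
      sqrt (real n) *\<^sub>R (thetabar_k M thetahat k gam dl n (beta0 + (1 / sqrt (real n)) *\<^sub>R deltan n \<omega>) (lam n \<omega>) \<omega>
                        - thetabar_k M thetahat k gam dl n beta0 (lam n \<omega>) \<omega>)
      - f' (deltan n \<omega>)) (\<lambda>n \<omega>. 1 + norm (deltan n \<omega>))"
proof -
  define b1 where "b1 n \<omega> = beta0 + (1 / sqrt (real n)) *\<^sub>R deltan n \<omega>" for n \<omega>
  have b1: "small_op P (\<lambda>n \<omega>. b1 n \<omega> - beta0) (\<lambda>_ _. 1)"
    unfolding b1_def using small_op_root_n_scaled[OF delta] by simp
  have beta0_B: "beta0 \<in> B"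
    using beta0 interior_subset by blast
  obtain r0 where "r0 > 0" and r0: "ball beta0 r0 \<subseteq> B"
    using beta0 mem_interior by blast
  define G where "G n = {\<omega> \<in> space P. norm (b1 n \<omega> - beta0) > r0/2 * 1}
    \<union> {\<omega> \<in> space P. norm (lam n \<omega>) > \<epsilon>0 * 1}" for n
  have G: "(\<lambda>n. outer_prob P (G n)) \<longlonglongrightarrow> 0"
    unfolding G_def using b1 lam(2) half_gt_zero[OF \<open>r0 > 0\<close>] bias(1) unfolding small_op_def
    by (intro outer_prob_tendsto_zero_Un) blast+
  have good: "b1 n \<omega> \<in> B \<and> lam n \<omega> \<in> {0..\<epsilon>0}" if "\<omega> \<in> space P - G n" for n \<omega>
  proof
    have "norm (b1 n \<omega> - beta0) \<le> r0/2"
      using that by (auto simp: G_def)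
    then have "dist beta0 (b1 n \<omega>) < r0"
      using \<open>r0 > 0\<close> by (simp add: dist_norm norm_minus_commute)
    then show "b1 n \<omega> \<in> B"
      using r0 by auto
    show "lam n \<omega> \<in> {0..\<epsilon>0}"
      using that lam(1) by (auto simp: G_def)
  qed
  have bias_small: "small_op P (\<lambda>n \<omega>. sqrt (real n) *\<^sub>R (theta_k theta k gam dl (b n \<omega>) (lam n \<omega>) - theta (b n \<omega>) 0))
      (\<lambda>_ _. 1)" if "\<And>n \<omega>. \<omega> \<in> space P - G n \<Longrightarrow> b n \<omega> \<in> B" for b
    by (rule small_op_root_n_bias[where f="\<lambda>b l. theta_k theta k gam dl b l - theta b 0", OF bias(2) lam(3) G])
      (use good that in blast)
  note errors = small_op_thetabar_k_error_increment[OF paths Fn M dl lam(1) b1 beta0_B G]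
  note linearization = small_op_root_n_linearization[OF deriv delta, folded b1_def]
  have rates: "\<forall>n \<omega>. (1::real) \<le> 1 + norm (deltan n \<omega>)" "\<forall>n \<omega>. norm (deltan n \<omega>) \<le> 1 + norm (deltan n \<omega>)"
    by simp_all
  have "small_op P (\<lambda>n \<omega>.
      (sqrt (real n) *\<^sub>R (thetabar_k M thetahat k gam dl n (b1 n \<omega>) (lam n \<omega>) \<omega> - theta_k theta k gam dl (b1 n \<omega>) (lam n \<omega>))
        - sqrt (real n) *\<^sub>R (thetabar_k M thetahat k gam dl n beta0 (lam n \<omega>) \<omega> - theta_k theta k gam dl beta0 (lam n \<omega>)))
      + sqrt (real n) *\<^sub>R (theta_k theta k gam dl (b1 n \<omega>) (lam n \<omega>) - theta (b1 n \<omega>) 0)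
      - sqrt (real n) *\<^sub>R (theta_k theta k gam dl beta0 (lam n \<omega>) - theta beta0 0)
      + (sqrt (real n) *\<^sub>R (theta (b1 n \<omega>) 0 - theta beta0 0) - f' (deltan n \<omega>)))
      (\<lambda>n \<omega>. 1 + norm (deltan n \<omega>))"
    using small_op_add[OF small_op_diff[OF small_op_add[OF small_op_rate_mono[OF rates(1) errors]
        small_op_rate_mono[OF rates(1) bias_small[of b1]]] small_op_rate_mono[OF rates(1) bias_small[of "\<lambda>_ _. beta0"]]]
        small_op_rate_mono[OF rates(2) linearization]] good beta0_B by blast
  then show ?thesis
    by (rule small_op_cong_eventually) (simp add: b1_def algebra_simps)
qed

theorem propositionB1:
  fixes P :: "'w measure" and Q :: "'v measure"
    and Mx :: "'x measure" and Me :: "'e measure" and My :: "'y measure"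
    and x :: "nat \<Rightarrow> 'w \<Rightarrow> 'x" and yobs :: "nat \<Rightarrow> 'w \<Rightarrow> 'y"
    and eta :: "nat \<Rightarrow> nat \<Rightarrow> 'w \<Rightarrow> 'e"
    and M :: nat
    and ystr :: "'x \<times> 'e \<Rightarrow> real^'b \<Rightarrow> real \<Rightarrow> 'y"
    and B :: "(real^'b) set" and Theta :: "(real^'p) set"
    and ell :: "'y \<Rightarrow> 'x \<Rightarrow> real^'p \<Rightarrow> real"
    and thetahat :: "nat \<Rightarrow> nat \<Rightarrow> real^'b \<Rightarrow> real \<Rightarrow> 'w \<Rightarrow> real^'p"
    and theta :: "real^'b \<Rightarrow> real \<Rightarrow> real^'p"
    and dl :: real and k k0 :: nat and gam :: "nat \<Rightarrow> real"
    and beta0 :: "real^'b" and lam :: "nat \<Rightarrow> 'w \<Rightarrow> real"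
    and W :: "real^'p^'p" and Wn :: "nat \<Rightarrow> 'w \<Rightarrow> real^'p^'p"
    and psi :: "nat \<Rightarrow> (real^'b) \<times> real \<Rightarrow> 'v \<Rightarrow> real^'p"
    and phi :: "nat \<Rightarrow> 'v \<Rightarrow> real^'p"
    and H Sigma R :: "real^'p^'p"
    and deltan :: "nat \<Rightarrow> 'w \<Rightarrow> real^'b"
  defines "theta0 \<equiv> theta beta0 0"
    and "psin \<equiv> (\<lambda>m n (s :: (real^'b) \<times> real) \<omega>. if m = 0
            then sqrt (real n) *\<^sub>R (thetahat 0 n beta0 0 \<omega> - theta beta0 0)
            else sqrt (real n) *\<^sub>R (thetahat m n (fst s) (snd s) \<omega> - theta (fst s) (snd s)))"
    and "phin \<equiv> (\<lambda>m n \<omega>. (1 / sqrt (real n)) *\<^sub>R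
            (\<Sum>i<n. grad (\<lambda>t. ell_i ell ystr yobs x eta m i beta0 0 t \<omega>) (theta beta0 0)))"
    and "Lpop \<equiv> (\<lambda>t. integral\<^sup>L P (\<lambda>\<omega>. ell (yobs 0 \<omega>) (x 0 \<omega>) t))"
  assumes P: "prob_space P" and Q: "prob_space Q"
    \<comment> \<open>sampling: (y_i,x_i) iid; eta^m_i (m \<ge> 1) iid over (i,m), independent of the x_i\<close>
    and iid_yx: "prob_space.indep_vars P (\<lambda>_. My \<Otimes>\<^sub>M Mx) (\<lambda>i \<omega>. (yobs i \<omega>, x i \<omega>)) UNIV"
    and iid_yx2: "\<forall>i. distr P (My \<Otimes>\<^sub>M Mx) (\<lambda>\<omega>. (yobs i \<omega>, x i \<omega>))
                     = distr P (My \<Otimes>\<^sub>M Mx) (\<lambda>\<omega>. (yobs 0 \<omega>, x 0 \<omega>))"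
    and iid_eta: "prob_space.indep_vars P (\<lambda>_. Me) (\<lambda>mi \<omega>. eta (fst mi) (snd mi) \<omega>) ({1..M} \<times> UNIV)"
    and iid_eta2: "\<forall>m\<in>{1..M}. \<forall>i. distr P Me (eta m i) = distr P Me (eta 1 0)"
    and indep_eta_x: "indep_rv P
        (Pi\<^sub>M UNIV (\<lambda>_. Mx)) (\<lambda>\<omega>. (\<lambda>i. x i \<omega>))
        (Pi\<^sub>M ({1..M} \<times> UNIV) (\<lambda>_. Me)) (\<lambda>\<omega>. restrict (\<lambda>mi. eta (fst mi) (snd mi) \<omega>) ({1..M} \<times> UNIV))"
    and eta0_meas: "\<forall>i. eta 0 i \<in> measurable P Me"
    and M: "M \<ge> 1"
    and B: "compact B"
    \<comment> \<open>estimators: maximisers of the (observed / simulated) auxiliary criterion\<close>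
    and thetahat0: "\<forall>n b l \<omega>. thetahat 0 n b l \<omega> = thetahat 0 n beta0 0 \<omega>"
    and thetahat_max: "\<forall>m\<le>M. \<forall>n. \<forall>b\<in>B. \<forall>l\<in>{0..1}. \<forall>\<omega>\<in>space P.
        thetahat m n b l \<omega> \<in> Theta \<and>
        (\<forall>t\<in>Theta. Ln ell ystr yobs x eta m n b l t \<omega> \<le> Ln ell ystr yobs x eta m n b l (thetahat m n b l \<omega>) \<omega>)"
    \<comment> \<open>jackknife\<close>
    and dl: "0 < dl" "dl < 1"
    and gam_sum: "(\<Sum>r\<le>k. gam r) = 1"
    and jack: "\<exists>C. \<exists>\<epsilon>\<in>{0<..1}. \<forall>b\<in>B. \<forall>l\<in>{0..\<epsilon>}.
        norm (theta_k theta k gam dl b l - theta b 0) \<le> C * l ^ (k + 1)"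
    \<comment> \<open>Assumption R\<close>
    and R1: "beta0 \<in> interior B" "\<forall>i. \<forall>\<omega>\<in>space P. yobs i \<omega> = ystr (x i \<omega>, eta 0 i \<omega>) beta0 0"
    and R2: "theta0 \<in> interior Theta"
    and R3: "\<forall>l\<in>{0..1}. diff_k (Suc k0) (interior B) (\<lambda>b. theta b l)"
    and R4: "inj_on (\<lambda>b. theta b 0) B"
    and R5: "\<forall>n. lam n \<in> borel_measurable P" "\<forall>n. \<forall>\<omega>\<in>space P. lam n \<omega> \<in> {0..1}"
       "small_op P lam (\<lambda>_ _. 1)"
    and R6: "k \<le> k0" "small_op P (\<lambda>n \<omega>. sqrt (real n) * lam n \<omega> ^ (k + 1)) (\<lambda>_ _. 1)"
    and R8: "small_op P (\<lambda>n \<omega>. Wn n \<omega> - W) (\<lambda>_ _. 1)" "\<forall>v. v \<noteq> 0 \<longrightarrow> v \<bullet> (W *v v) > 0"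
    \<comment> \<open>Assumption H\<close>
    and H1: "\<forall>n. \<forall>\<omega>\<in>space P. C2_on (interior Theta) (\<lambda>t. Ln ell ystr yobs x eta 0 n beta0 0 t \<omega>)"
    and H2: "\<forall>K. compact K \<and> K \<subseteq> interior Theta \<longrightarrow>
        op_unif P K (\<lambda>n t \<omega>. Ln ell ystr yobs x eta 0 n beta0 0 t \<omega> - Lpop t) \<and>
        op_unif P K (\<lambda>n t \<omega>. grad (\<lambda>s. Ln ell ystr yobs x eta 0 n beta0 0 s \<omega>) t - grad Lpop t) \<and>
        op_unif P K (\<lambda>n t \<omega>. hess (\<lambda>s. Ln ell ystr yobs x eta 0 n beta0 0 s \<omega>) t - hess Lpop t) \<and>
        (\<forall>m1\<le>M. \<forall>m2\<le>M. op_unif P ((B \<times> {0..1} \<times> K) \<times> (B \<times> {0..1} \<times> K))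
          (\<lambda>n ((b1, l1, t1), (b2, l2, t2)) \<omega>.
             (1 / real n) *\<^sub>R (\<Sum>i<n. outerp (grad (\<lambda>s. ell_i ell ystr yobs x eta m1 i b1 l1 s \<omega>) t1)
                                            (grad (\<lambda>s. ell_i ell ystr yobs x eta m2 i b2 l2 s \<omega>) t2))
             - integral\<^sup>L P (\<lambda>\<omega>'. outerp (grad (\<lambda>s. ell_i ell ystr yobs x eta m1 0 b1 l1 s \<omega>') t1)
                                          (grad (\<lambda>s. ell_i ell ystr yobs x eta m2 0 b2 l2 s \<omega>') t2))))"
    and H3: "weak_conv P (\<lambda>n \<omega>. \<lambda>m s. psin m n s \<omega>) Q (\<lambda>v m s. psi m s v)
        (bdd_paths M (B \<times> {0..1})) (sup_dist M (B \<times> {0..1}))"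
      "\<forall>m\<le>M. mean0_cont_gaussian_process Q (B \<times> {0..1}) (psi m)"
    and H4: "\<forall>bn. (\<forall>n. bn n \<in> borel_measurable P) \<and> small_op P (\<lambda>n \<omega>. bn n \<omega> - beta0) (\<lambda>_ _. 1) \<longrightarrow>
        (\<forall>m\<le>M. small_op P (\<lambda>n \<omega>. psin m n (bn n \<omega>, lam n \<omega>) \<omega> + matrix_inv H *v phin m n \<omega>) (\<lambda>_ _. 1))"
      "H = hess Lpop theta0"
      "\<forall>n\<ge>1. integral\<^sup>L P (\<lambda>\<omega>. hess (\<lambda>t. Ln ell ystr yobs x eta 0 n beta0 0 t \<omega>) theta0) = H"
      "invertible H"
      "weak_conv P (\<lambda>n \<omega>. \<lambda>m. phin m n \<omega>) Q (\<lambda>v m. phi m v) UNIV (max_dist M)"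
      "\<forall>c. gaussian_rv Q (\<lambda>v. \<Sum>m\<le>M. c m \<bullet> phi m v)"
      "\<forall>m\<le>M. integral\<^sup>L Q (\<lambda>v. outerp (phi m v) (phi m v)) = Sigma \<and>
         (\<forall>n\<ge>1. integral\<^sup>L P (\<lambda>\<omega>. outerp (phin m n \<omega>) (phin m n \<omega>)) = Sigma)"
      "\<forall>m1\<le>M. \<forall>m2\<le>M. m1 \<noteq> m2 \<longrightarrow> integral\<^sup>L Q (\<lambda>v. outerp (phi m1 v) (phi m2 v)) = R \<and>
         (\<forall>n\<ge>1. integral\<^sup>L P (\<lambda>\<omega>. outerp (phin m1 n \<omega>) (phin m2 n \<omega>)) = R)"
    and H5_0: "\<forall>m\<in>{1..M}. op_unif P B (\<lambda>n b \<omega>. thetahat m n b (lam n \<omega>) \<omega> - theta b 0)"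
    \<comment> \<open>the local sequence beta_n = beta0 + n^(-1/2) delta_n\<close>
    and deltan: "\<forall>n. deltan n \<in> borel_measurable P" "small_op P deltan (\<lambda>n _. sqrt (real n))"
  shows "op_unif P B (\<lambda>n b \<omega>. thetabar_k M thetahat k gam dl n b (lam n \<omega>) \<omega>
                                 - theta_k theta k gam dl b (lam n \<omega>)) \<and>
         big_Op P (\<lambda>n \<omega>. theta_k theta k gam dl beta0 (lam n \<omega>) - theta beta0 0)
                  (\<lambda>n \<omega>. lam n \<omega> ^ (k + 1)) \<and>
         small_op P (\<lambda>n \<omega>.
            sqrt (real n) *\<^sub>R (thetabar_k M thetahat k gam dl n (beta0 + (1 / sqrt (real n)) *\<^sub>R deltan n \<omega>) (lam n \<omega>) \<omega>
                              - thetabar_k M thetahat k gam dl n beta0 (lam n \<omega>) \<omega>)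
            - jacobian (\<lambda>b. theta b 0) (at beta0) *v deltan n \<omega>)
          (\<lambda>n \<omega>. 1 + norm (deltan n \<omega>))"
proof -
  have beta0_B: "beta0 \<in> B"
    using R1(1) interior_subset by blast
  have paths: "weak_conv_cont_paths P Q (\<lambda>n \<omega> m s. psin m n s \<omega>) (\<lambda>v m s. psi m s v) M (B \<times> {0..1})"
    by (rule weak_conv_cont_paths_gaussian[OF P Q H3(1) _ compact_Times[OF B compact_Icc] H3(2)])
      (use beta0_B in auto)
  have Fn: "psin m n (b, l) \<omega> = sqrt (real n) *\<^sub>R (thetahat m n b l \<omega> - theta b l)" if "m \<in> {1..M}" for n \<omega> m b l
    using that by (simp add: psin_def)
  have dl': "0 \<le> dl" "dl \<le> 1"
    using dl by simp_all
  obtain C \<epsilon>0 where "\<epsilon>0 \<in> {0<..1}"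
    and bias: "\<forall>b\<in>B. \<forall>l\<in>{0..\<epsilon>0}. norm (theta_k theta k gam dl b l - theta b 0) \<le> C * l ^ (k + 1)"
    using jack by blast
  then have \<epsilon>0: "\<epsilon>0 > 0"
    by simp
  have deriv: "((\<lambda>b. theta b 0) has_derivative (\<lambda>h. jacobian (\<lambda>b. theta b 0) (at beta0) *v h)) (at beta0)"
    by (rule diff_k_Suc_has_jacobian[where k=k0, OF _ R1(1)]) (use R3 in simp)
  have "\<forall>n. \<forall>\<omega>\<in>space P. 0 \<le> lam n \<omega>"
    using R5(2) by simp
  moreover have "\<forall>l\<in>{0..\<epsilon>0}. norm (theta_k theta k gam dl beta0 l - theta beta0 0) \<le> C * l ^ (k + 1)"
    using bias beta0_B by blast
  ultimately have "big_Op P (\<lambda>n \<omega>. theta_k theta k gam dl beta0 (lam n \<omega>) - theta beta0 0) (\<lambda>n \<omega>. lam n \<omega> ^ (k + 1))"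
    by (rule big_Op_of_local_power_bound[OF R5(3) _ \<epsilon>0])
  then show ?thesis
    using op_unif_thetabar_k[OF paths Fn M dl' R5(2)]
      small_op_thetabar_k_increment[OF paths Fn M dl' R5(2,3) R6(2) \<epsilon>0 bias R1(1) deriv deltan(2)]
    by blast
qed

end
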